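(* Let $B$ be the Boolean lattice of subsets of a finite set $A$ and $F$ a sheaf on $B$. Suppose there is $a\in A$ such that for every $x\in B_a$ the structure map $F^{x\cup\{a\}}_x:F(x\cup\{a\})\to F(x)$ is injective. Then $$\mathrm{HC}_*(B;F)\cong\mathrm{HC}_*(B_a;F_a/F^a).$$
   Context: A sheaf $F$ on a poset assigns an $R$-module $F(x)$ ($R$ commutative with $1$) to each element and a homomorphism $F^y_x:F(y)\to F(x)$ to each $x\le y$, functorially. $B_a$ is the sub-Boolean lattice of subsets of $A\setminus\{a\}$. $F_a$ is the restriction of $F$ to $B_a$. $F^a$ is the sheaf on $B_a$ with $F^a(x)=F(x\cup\{a\})$ and, for $x\subseteq y$ in $B_a$, structure map $F^{y\cup\{a\}}_{x\cup\{a\}}$. The maps $F^{x\cup\{a\}}_x$ form an injective morphism of sheaves $F^a\to F_a$ on $B_a$, and $F_a/F^a$ is the quotient sheaf. Cellular homology of a Boolean lattice $B'$ of subsets of $\{a_1,\dots,a_n\}$ with sheaf $G$: $C_k(B';G)=\bigoplus_{|x|=k}G(x)$ with differential $\sum\varepsilon^x_yG^x_y$ over $y\subset x$, $|y|=|x|-1$, where $\varepsilon^x_y=(-1)^{j-1}$ if $x=\{a_{i_1},\dots,a_{i_k}\}$ ($i_1<\cdots<i_k$) and $y=x\setminus\{a_{i_j}\}$; $\mathrm{HC}_*(B';G)$ is its homology. *)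

theory Defs
  imports "HOL-Algebra.Module" "HOL-Algebra.AbelCoset"
begin

definition module_hom ::
  "'r ring \<Rightarrow> ('r, 'm) module \<Rightarrow> ('r, 'n) module \<Rightarrow> ('m \<Rightarrow> 'n) set" where
  "module_hom R M N = {h. h \<in> carrier M \<rightarrow> carrier N \<and>
     (\<forall>u\<in>carrier M. \<forall>v\<in>carrier M. h (u \<oplus>\<^bsub>M\<^esub> v) = h u \<oplus>\<^bsub>N\<^esub> h v) \<and>
     (\<forall>r\<in>carrier R. \<forall>v\<in>carrier M. h (r \<odot>\<^bsub>M\<^esub> v) = r \<odot>\<^bsub>N\<^esub> h v)}"

definition module_isomorphic ::
  "'r ring \<Rightarrow> ('r, 'm) module \<Rightarrow> ('r, 'n) module \<Rightarrow> bool" where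
  "module_isomorphic R M N \<longleftrightarrow>
     (\<exists>h. h \<in> module_hom R M N \<and> bij_betw h (carrier M) (carrier N))"

text \<open>A sheaf of R-modules on the Boolean lattice of subsets of S:
  G x is the module at x, and g y x is the structure map G(y) -> G(x) for x \<subseteq> y.\<close>
definition is_sheaf ::
  "'r ring \<Rightarrow> 'a set \<Rightarrow> ('a set \<Rightarrow> ('r, 'm) module) \<Rightarrow> ('a set \<Rightarrow> 'a set \<Rightarrow> 'm \<Rightarrow> 'm) \<Rightarrow> bool" where
  "is_sheaf R S G g \<longleftrightarrow>
     (\<forall>x. x \<subseteq> S \<longrightarrow> module R (G x)) \<and>
     (\<forall>x y. x \<subseteq> y \<and> y \<subseteq> S \<longrightarrow> g y x \<in> module_hom R (G y) (G x)) \<and>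
     (\<forall>x. x \<subseteq> S \<longrightarrow> (\<forall>v\<in>carrier (G x). g x x v = v)) \<and>
     (\<forall>x y z. x \<subseteq> y \<and> y \<subseteq> z \<and> z \<subseteq> S \<longrightarrow>
        (\<forall>v\<in>carrier (G z). g y x (g z y v) = g z x v))"

definition quot_module ::
  "('r, 'm) module \<Rightarrow> 'm set \<Rightarrow> 'm set \<Rightarrow> ('r, 'm set) module" where
  "quot_module M Z N =
    \<lparr> carrier = (\<lambda>v. N +>\<^bsub>M\<^esub> v) ` Z,
      mult = (\<lambda>_ _. undefined), one = undefined,
      zero = N,
      add = (\<lambda>X Y. X <+>\<^bsub>M\<^esub> Y),
      smult = (\<lambda>r X. \<Union>v\<in>X. N +>\<^bsub>M\<^esub> (r \<odot>\<^bsub>M\<^esub> v)) \<rparr>"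

text \<open>Cellular chains C_k(B';G) = direct sum of G(x) over x \<subseteq> S with |x| = k,
  represented as extensional functions on the cells.\<close>
definition cell_chains ::
  "'a set \<Rightarrow> ('a set \<Rightarrow> ('r, 'm) module) \<Rightarrow> nat \<Rightarrow> ('r, 'a set \<Rightarrow> 'm) module" where
  "cell_chains S G k =
    \<lparr> carrier = {c. (\<forall>x. x \<subseteq> S \<and> card x = k \<longrightarrow> c x \<in> carrier (G x)) \<and>
                   (\<forall>x. \<not> (x \<subseteq> S \<and> card x = k) \<longrightarrow> c x = undefined)},
      mult = (\<lambda>_ _. undefined), one = undefined,
      zero = (\<lambda>x. if x \<subseteq> S \<and> card x = k then \<zero>\<^bsub>G x\<^esub> else undefined),
      add = (\<lambda>c d x. if x \<subseteq> S \<and> card x = k then c x \<oplus>\<^bsub>G x\<^esub> d x else undefined),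
      smult = (\<lambda>r c x. if x \<subseteq> S \<and> card x = k then r \<odot>\<^bsub>G x\<^esub> c x else undefined) \<rparr>"

text \<open>For a cell y with |y| = k and x = insert b y,
  the sign is (-1)^(j-1) where b is the j-th element of x in the order of the ground set,
  i.e. j - 1 = card {b' \<in> x. b' < b}.\<close>
definition cell_diff ::
  "'r ring \<Rightarrow> 'a::linorder set \<Rightarrow> ('a set \<Rightarrow> ('r, 'm) module) \<Rightarrow> ('a set \<Rightarrow> 'a set \<Rightarrow> 'm \<Rightarrow> 'm)
    \<Rightarrow> nat \<Rightarrow> ('a set \<Rightarrow> 'm) \<Rightarrow> ('a set \<Rightarrow> 'm)" where
  "cell_diff R S G g k c =
    (\<lambda>y. if y \<subseteq> S \<and> card y = k then
           finsum (G y)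
             (\<lambda>b. ((\<ominus>\<^bsub>R\<^esub> \<one>\<^bsub>R\<^esub>) [^]\<^bsub>R\<^esub> card {b' \<in> insert b y. b' < b})
                    \<odot>\<^bsub>G y\<^esub> g (insert b y) y (c (insert b y)))
             (S - y)
         else undefined)"

definition cell_cycles ::
  "'r ring \<Rightarrow> 'a::linorder set \<Rightarrow> ('a set \<Rightarrow> ('r, 'm) module) \<Rightarrow> ('a set \<Rightarrow> 'a set \<Rightarrow> 'm \<Rightarrow> 'm)
    \<Rightarrow> nat \<Rightarrow> ('a set \<Rightarrow> 'm) set" where
  "cell_cycles R S G g k =
    {c \<in> carrier (cell_chains S G k).
       k = 0 \<or> cell_diff R S G g (k - 1) c = \<zero>\<^bsub>cell_chains S G (k - 1)\<^esub>}"

definition cell_boundaries ::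
  "'r ring \<Rightarrow> 'a::linorder set \<Rightarrow> ('a set \<Rightarrow> ('r, 'm) module) \<Rightarrow> ('a set \<Rightarrow> 'a set \<Rightarrow> 'm \<Rightarrow> 'm)
    \<Rightarrow> nat \<Rightarrow> ('a set \<Rightarrow> 'm) set" where
  "cell_boundaries R S G g k = cell_diff R S G g k ` carrier (cell_chains S G (Suc k))"

definition HC ::
  "'r ring \<Rightarrow> 'a::linorder set \<Rightarrow> ('a set \<Rightarrow> ('r, 'm) module) \<Rightarrow> ('a set \<Rightarrow> 'a set \<Rightarrow> 'm \<Rightarrow> 'm)
    \<Rightarrow> nat \<Rightarrow> ('r, ('a set \<Rightarrow> 'm) set) module" where
  "HC R S G g k = quot_module (cell_chains S G k) (cell_cycles R S G g k) (cell_boundaries R S G g k)"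

text \<open>The quotient sheaf F_a / F^a on B_a: at x it is F(x) / F^{x \<union> {a}}_x (F(x \<union> {a})).\<close>
definition quot_sheaf ::
  "('a set \<Rightarrow> ('r, 'm) module) \<Rightarrow> ('a set \<Rightarrow> 'a set \<Rightarrow> 'm \<Rightarrow> 'm) \<Rightarrow> 'a
    \<Rightarrow> 'a set \<Rightarrow> ('r, 'm set) module" where
  "quot_sheaf F f a x =
     quot_module (F x) (carrier (F x)) (f (insert a x) x ` carrier (F (insert a x)))"

definition quot_sheaf_map ::
  "('a set \<Rightarrow> ('r, 'm) module) \<Rightarrow> ('a set \<Rightarrow> 'a set \<Rightarrow> 'm \<Rightarrow> 'm) \<Rightarrow> 'a
    \<Rightarrow> 'a set \<Rightarrow> 'a set \<Rightarrow> 'm set \<Rightarrow> 'm set" where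
  "quot_sheaf_map F f a y x X =
     (\<Union>v\<in>X. (f (insert a x) x ` carrier (F (insert a x))) +>\<^bsub>F x\<^esub> f y x v)"

end

(*
  Forgetting the cells that contain a and reducing each remaining value c(y) modulo the image of
  F(insert a y) in F(y) is a surjective chain map from C(B;F) to C(B_a;F_a/F^a).  Its kernel is
  acyclic: the values z(y) of a kernel cycle z lift through the injective maps
  F(insert a y) -> F(y) to some t(y), and the chain carrying +-t(y) on the cells insert a y has
  boundary z.  For this one uses that a cycle vanishing on all cells avoiding a is zero, since its
  value on insert a y is recovered, up to sign and injectively, from the a-face of its boundary
  at y.  A surjective chain map with acyclic kernel induces isomorphisms in homology.
*)

theory Submission
  imports Defs
begin

section \<open>Linear maps and quotient modules\<close>

lemma module_hom_closed:
  "h \<in> module_hom R M N \<Longrightarrow> x \<in> carrier M \<Longrightarrow> h x \<in> carrier N"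
  unfolding module_hom_def by auto

lemma module_hom_add:
  "h \<in> module_hom R M N \<Longrightarrow> x \<in> carrier M \<Longrightarrow> y \<in> carrier M \<Longrightarrow>
    h (x \<oplus>\<^bsub>M\<^esub> y) = h x \<oplus>\<^bsub>N\<^esub> h y"
  unfolding module_hom_def by auto

lemma module_hom_smult:
  "h \<in> module_hom R M N \<Longrightarrow> r \<in> carrier R \<Longrightarrow> x \<in> carrier M \<Longrightarrow>
    h (r \<odot>\<^bsub>M\<^esub> x) = r \<odot>\<^bsub>N\<^esub> h x"
  unfolding module_hom_def by auto

lemma module_hom_abelian_group_hom:
  assumes "module R M" "module R N" "h \<in> module_hom R M N"
  shows "abelian_group_hom M N h"
proof (rule abelian_group_homI)
  show "abelian_group M" "abelian_group N" using assms(1,2) by (simp_all add: module_def)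
  then show "group_hom (add_monoid M) (add_monoid N) h"
    using assms(3) unfolding group_hom_def group_hom_axioms_def hom_def module_hom_def
    by (simp add: abelian_group.a_group)
qed

lemma module_hom_finsum:
  assumes "module R M" "module R N" "h \<in> module_hom R M N" "finite I" "u \<in> I \<rightarrow> carrier M"
  shows "h (finsum M u I) = finsum N (\<lambda>i. h (u i)) I"
proof -
  interpret abelian_group_hom M N h using module_hom_abelian_group_hom[OF assms(1-3)] .
  show ?thesis using assms(4,5) by (induction I rule: finite_induct) (simp_all add: Pi_iff)
qed

lemma module_hom_image_submodule:
  assumes "module R M" "module R N" "h \<in> module_hom R M N"
  shows "submodule (h ` carrier M) R N"
proof -
  interpret M: module R M by fact
  interpret N: module R N by fact
  interpret abelian_group_hom M N h using module_hom_abelian_group_hom[OF assms] .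
  show ?thesis
  proof (rule N.submoduleI)
    show "\<zero>\<^bsub>N\<^esub> \<in> h ` carrier M" using hom_zero M.zero_closed by (metis image_eqI)
  next
    fix u v assume "u \<in> h ` carrier M" "v \<in> h ` carrier M"
    then show "u \<oplus>\<^bsub>N\<^esub> v \<in> h ` carrier M" by (auto simp flip: hom_add)
  next
    fix u assume "u \<in> h ` carrier M"
    then show "\<ominus>\<^bsub>N\<^esub> u \<in> h ` carrier M" by (auto simp flip: hom_a_inv)
  next
    fix r u assume "r \<in> carrier R" "u \<in> h ` carrier M"
    then obtain x where "x \<in> carrier M" "u = h x" by blast
    then show "r \<odot>\<^bsub>N\<^esub> u \<in> h ` carrier M"
      using module_hom_smult[OF assms(3)] \<open>r \<in> carrier R\<close> by (metis M.smult_closed image_eqI)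
  qed auto
qed

lemma module_hom_kernel_submodule:
  assumes "module R M" "module R N" "h \<in> module_hom R M N"
  shows "submodule {x \<in> carrier M. h x = \<zero>\<^bsub>N\<^esub>} R M"
proof -
  interpret M: module R M by fact
  interpret N: module R N by fact
  interpret abelian_group_hom M N h using module_hom_abelian_group_hom[OF assms] .
  show ?thesis
    by (rule M.submoduleI) (auto simp: module_hom_smult[OF assms(3)])
qed

lemma submodule_abelian_subgroup:
  "module R M \<Longrightarrow> submodule H R M \<Longrightarrow> abelian_subgroup H M"
  by (intro abelian_subgroupI3 additive_subgroup.intro)
     (auto dest: submodule.axioms(1) simp: module_def)

lemma smult_module_hom:
  assumes "module R M" "r \<in> carrier R"
  shows "(\<lambda>v. r \<odot>\<^bsub>M\<^esub> v) \<in> module_hom R M M"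
proof -
  interpret module R M by fact
  show ?thesis
    unfolding module_hom_def using assms(2) by (simp add: smult_r_distr smult_assoc1[symmetric] m_comm)
qed

lemma coset_image_eq:
  assumes \<phi>: "abelian_group_hom M N \<phi>" and H: "abelian_subgroup H M" and K: "abelian_subgroup K N"
    and \<phi>_H: "\<phi> ` H \<subseteq> K" and x: "x \<in> carrier M" and w: "w \<in> H +>\<^bsub>M\<^esub> x"
  shows "K +>\<^bsub>N\<^esub> \<phi> w = K +>\<^bsub>N\<^esub> \<phi> x"
proof -
  interpret \<phi>: abelian_group_hom M N \<phi> by (rule \<phi>)
  interpret H: abelian_subgroup H M by (rule H)
  interpret K: abelian_subgroup K N by (rule K)
  obtain h where h: "h \<in> H" "w = h \<oplus>\<^bsub>M\<^esub> x" using w unfolding a_r_coset_def' by blast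
  have "h \<in> carrier M" using h(1) H.a_subset by blast
  then have "\<phi> w = \<phi> h \<oplus>\<^bsub>N\<^esub> \<phi> x" using h(2) x by simp
  moreover have "\<phi> h \<in> K" using \<phi>_H h(1) by blast
  ultimately have "\<phi> w \<in> K +>\<^bsub>N\<^esub> \<phi> x" unfolding a_r_coset_def' by blast
  then show ?thesis using K.a_repr_independence' x by (metis \<phi>.hom_closed)
qed

definition quot_map :: "('r, 'n) module \<Rightarrow> 'n set \<Rightarrow> ('m \<Rightarrow> 'n) \<Rightarrow> 'm set \<Rightarrow> 'n set" where
  "quot_map N K \<phi> X = (\<Union>w\<in>X. K +>\<^bsub>N\<^esub> \<phi> w)"

lemma quot_map_coset:
  assumes M: "module R M" and N: "module R N" and H: "submodule H R M" and K: "submodule K R N"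
    and \<phi>: "\<phi> \<in> module_hom R M N" and \<phi>_H: "\<phi> ` H \<subseteq> K" and x: "x \<in> carrier M"
  shows "quot_map N K \<phi> (H +>\<^bsub>M\<^esub> x) = K +>\<^bsub>N\<^esub> \<phi> x"
proof -
  note cosets = module_hom_abelian_group_hom[OF M N \<phi>]
    submodule_abelian_subgroup[OF M H] submodule_abelian_subgroup[OF N K]
  have "quot_map N K \<phi> (H +>\<^bsub>M\<^esub> x) = (\<Union>w\<in>H +>\<^bsub>M\<^esub> x. K +>\<^bsub>N\<^esub> \<phi> x)"
    unfolding quot_map_def using coset_image_eq[OF cosets \<phi>_H x] by simp
  also have "\<dots> = K +>\<^bsub>N\<^esub> \<phi> x" using abelian_subgroup.a_rcos_self[OF cosets(2) x] by auto
  finally show ?thesis .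
qed

lemma quot_module_carrier: "carrier (quot_module M Z H) = (\<lambda>v. H +>\<^bsub>M\<^esub> v) ` Z"
  unfolding quot_module_def by simp

context
  fixes R :: "'r ring" and M :: "('r, 'm) module" and H :: "'m set"
  assumes M: "module R M" and H: "submodule H R M"
begin

interpretation M: module R M by (rule M)
interpretation H: abelian_subgroup H M by (rule submodule_abelian_subgroup[OF M H])

lemma quot_module_zero: "\<zero>\<^bsub>quot_module M Z H\<^esub> = H +>\<^bsub>M\<^esub> \<zero>\<^bsub>M\<^esub>"
  unfolding quot_module_def using H.a_subset by simp

lemma quot_module_add:
  "x \<in> carrier M \<Longrightarrow> y \<in> carrier M \<Longrightarrow>
    (H +>\<^bsub>M\<^esub> x) \<oplus>\<^bsub>quot_module M Z H\<^esub> (H +>\<^bsub>M\<^esub> y) = H +>\<^bsub>M\<^esub> (x \<oplus>\<^bsub>M\<^esub> y)"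
  unfolding quot_module_def by (simp add: H.a_rcos_sum)

lemma quot_module_smult:
  assumes "r \<in> carrier R" "x \<in> carrier M"
  shows "r \<odot>\<^bsub>quot_module M Z H\<^esub> (H +>\<^bsub>M\<^esub> x) = H +>\<^bsub>M\<^esub> (r \<odot>\<^bsub>M\<^esub> x)"
proof -
  have "r \<odot>\<^bsub>quot_module M Z H\<^esub> (H +>\<^bsub>M\<^esub> x) = quot_map M H (\<lambda>v. r \<odot>\<^bsub>M\<^esub> v) (H +>\<^bsub>M\<^esub> x)"
    unfolding quot_module_def quot_map_def by simp
  also have "\<dots> = H +>\<^bsub>M\<^esub> (r \<odot>\<^bsub>M\<^esub> x)"
    using submodule.smult_closed[OF H] assms by (intro quot_map_coset[OF M M H H smult_module_hom[OF M]]) auto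
  finally show ?thesis .
qed

lemma coset_eq_iff:
  "x \<in> carrier M \<Longrightarrow> y \<in> carrier M \<Longrightarrow>
    H +>\<^bsub>M\<^esub> x = H +>\<^bsub>M\<^esub> y \<longleftrightarrow> x \<oplus>\<^bsub>M\<^esub> \<ominus>\<^bsub>M\<^esub> y \<in> H"
  by (metis H.a_rcos_module H.a_rcos_self H.a_repr_independence')

lemma quot_module_zero_iff:
  "v \<in> carrier M \<Longrightarrow> H +>\<^bsub>M\<^esub> v = \<zero>\<^bsub>quot_module M Z H\<^esub> \<longleftrightarrow> v \<in> H"
  unfolding quot_module_zero M.a_coset_add_zero[OF H.a_subset]
  using M.a_coset_join1 M.a_coset_join2 H.a_subgroup by blast

lemma quot_module_carrier_iff:
  "X \<in> carrier (quot_module M (carrier M) H) \<longleftrightarrow> (\<exists>x\<in>carrier M. X = H +>\<^bsub>M\<^esub> x)"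
  by (auto simp: quot_module_carrier)

lemma quot_module_abelian_group: "abelian_group (quot_module M (carrier M) H)" (is "abelian_group ?Q")
proof (rule abelian_groupI)
  note ops = quot_module_add quot_module_zero
  fix X Y assume "X \<in> carrier ?Q" "Y \<in> carrier ?Q"
  then obtain x y where "x \<in> carrier M" "y \<in> carrier M" "X = H +>\<^bsub>M\<^esub> x" "Y = H +>\<^bsub>M\<^esub> y"
    unfolding quot_module_carrier_iff by blast
  then show "X \<oplus>\<^bsub>?Q\<^esub> Y \<in> carrier ?Q" "X \<oplus>\<^bsub>?Q\<^esub> Y = Y \<oplus>\<^bsub>?Q\<^esub> X"
    unfolding quot_module_carrier_iff by (auto simp: ops M.a_comm)
next
  fix X Y Z assume "X \<in> carrier ?Q" "Y \<in> carrier ?Q" "Z \<in> carrier ?Q"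
  then obtain x y z where "x \<in> carrier M" "y \<in> carrier M" "z \<in> carrier M"
    "X = H +>\<^bsub>M\<^esub> x" "Y = H +>\<^bsub>M\<^esub> y" "Z = H +>\<^bsub>M\<^esub> z"
    unfolding quot_module_carrier_iff by blast
  then show "X \<oplus>\<^bsub>?Q\<^esub> Y \<oplus>\<^bsub>?Q\<^esub> Z = X \<oplus>\<^bsub>?Q\<^esub> (Y \<oplus>\<^bsub>?Q\<^esub> Z)"
    by (simp add: quot_module_add M.a_assoc)
next
  fix X assume "X \<in> carrier ?Q"
  then obtain x where x: "x \<in> carrier M" "X = H +>\<^bsub>M\<^esub> x" unfolding quot_module_carrier_iff by blast
  then show "\<zero>\<^bsub>?Q\<^esub> \<oplus>\<^bsub>?Q\<^esub> X = X" by (simp add: quot_module_add quot_module_zero)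
  have "(H +>\<^bsub>M\<^esub> \<ominus>\<^bsub>M\<^esub> x) \<oplus>\<^bsub>?Q\<^esub> X = \<zero>\<^bsub>?Q\<^esub>"
    unfolding x(2) quot_module_add[OF M.a_inv_closed[OF x(1)] x(1)] M.l_neg[OF x(1)]
    by (rule quot_module_zero[symmetric])
  moreover have "H +>\<^bsub>M\<^esub> \<ominus>\<^bsub>M\<^esub> x \<in> carrier ?Q"
    using M.a_inv_closed[OF x(1)] unfolding quot_module_carrier_iff by blast
  ultimately show "\<exists>Y\<in>carrier ?Q. Y \<oplus>\<^bsub>?Q\<^esub> X = \<zero>\<^bsub>?Q\<^esub>" by blast
qed (auto simp: quot_module_carrier_iff quot_module_zero)

lemma quot_module_module: "module R (quot_module M (carrier M) H)" (is "module R ?Q")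
proof (rule moduleI[OF M.is_cring quot_module_abelian_group])
  fix r s X assume rs: "r \<in> carrier R" "s \<in> carrier R" and "X \<in> carrier ?Q"
  then obtain x where "x \<in> carrier M" "X = H +>\<^bsub>M\<^esub> x" unfolding quot_module_carrier_iff by blast
  with rs show "(r \<oplus>\<^bsub>R\<^esub> s) \<odot>\<^bsub>?Q\<^esub> X = r \<odot>\<^bsub>?Q\<^esub> X \<oplus>\<^bsub>?Q\<^esub> s \<odot>\<^bsub>?Q\<^esub> X"
    "(r \<otimes>\<^bsub>R\<^esub> s) \<odot>\<^bsub>?Q\<^esub> X = r \<odot>\<^bsub>?Q\<^esub> (s \<odot>\<^bsub>?Q\<^esub> X)"
    by (simp_all add: quot_module_add quot_module_smult M.smult_l_distr M.smult_assoc1)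
next
  fix r X Y assume r: "r \<in> carrier R" and "X \<in> carrier ?Q" "Y \<in> carrier ?Q"
  then obtain x y where "x \<in> carrier M" "y \<in> carrier M" "X = H +>\<^bsub>M\<^esub> x" "Y = H +>\<^bsub>M\<^esub> y"
    unfolding quot_module_carrier_iff by blast
  with r show "r \<odot>\<^bsub>?Q\<^esub> (X \<oplus>\<^bsub>?Q\<^esub> Y) = r \<odot>\<^bsub>?Q\<^esub> X \<oplus>\<^bsub>?Q\<^esub> r \<odot>\<^bsub>?Q\<^esub> Y"
    by (simp add: quot_module_add quot_module_smult M.smult_r_distr)
next
  fix X assume "X \<in> carrier ?Q"
  then obtain x where "x \<in> carrier M" "X = H +>\<^bsub>M\<^esub> x" unfolding quot_module_carrier_iff by blast
  then show "\<one>\<^bsub>R\<^esub> \<odot>\<^bsub>?Q\<^esub> X = X" by (simp add: quot_module_smult)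
next
  fix r X assume r: "r \<in> carrier R" and "X \<in> carrier ?Q"
  then obtain x where x: "x \<in> carrier M" "X = H +>\<^bsub>M\<^esub> x" unfolding quot_module_carrier_iff by blast
  show "r \<odot>\<^bsub>?Q\<^esub> X \<in> carrier ?Q"
    unfolding quot_module_carrier_iff x(2) quot_module_smult[OF r x(1)]
    using M.smult_closed[OF r x(1)] by blast
qed

lemma quot_module_proj_hom:
  "(\<lambda>v. H +>\<^bsub>M\<^esub> v) \<in> module_hom R M (quot_module M (carrier M) H)"
  unfolding module_hom_def quot_module_carrier
  by (simp add: quot_module_add quot_module_smult)

end

context
  fixes R :: "'r ring" and M :: "('r, 'm) module" and N :: "('r, 'n) module"
    and H :: "'m set" and K :: "'n set" and \<phi> :: "'m \<Rightarrow> 'n"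
  assumes M: "module R M" and N: "module R N"
    and H: "submodule H R M" and K: "submodule K R N"
    and \<phi>: "\<phi> \<in> module_hom R M N" and \<phi>_H: "\<phi> ` H \<subseteq> K"
begin

interpretation M: module R M by (rule M)
interpretation \<phi>: abelian_group_hom M N \<phi> by (rule module_hom_abelian_group_hom[OF M N \<phi>])

lemma quot_map_hom:
  assumes Z: "Z \<subseteq> carrier M" and \<phi>_Z: "\<phi> ` Z \<subseteq> Z'"
  shows "quot_map N K \<phi> \<in> module_hom R (quot_module M Z H) (quot_module N Z' K)"
proof -
  have Q: "X \<in> carrier (quot_module M Z H) \<longleftrightarrow> (\<exists>x\<in>Z. X = H +>\<^bsub>M\<^esub> x)" for X
    by (auto simp: quot_module_carrier)
  note coset = quot_map_coset[OF M N H K \<phi> \<phi>_H]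
  show ?thesis
    unfolding module_hom_def
  proof (intro CollectI conjI ballI)
    show "quot_map N K \<phi> \<in> carrier (quot_module M Z H) \<rightarrow> carrier (quot_module N Z' K)"
    proof
      fix X assume "X \<in> carrier (quot_module M Z H)"
      then obtain x where "x \<in> Z" "X = H +>\<^bsub>M\<^esub> x" unfolding Q by blast
      then show "quot_map N K \<phi> X \<in> carrier (quot_module N Z' K)"
        using Z \<phi>_Z unfolding quot_module_carrier by (simp add: coset subset_eq)
    qed
  next
    fix X Y assume "X \<in> carrier (quot_module M Z H)" "Y \<in> carrier (quot_module M Z H)"
    then obtain x y where "x \<in> carrier M" "y \<in> carrier M" "X = H +>\<^bsub>M\<^esub> x" "Y = H +>\<^bsub>M\<^esub> y"
      using Z unfolding Q by blast
    then show "quot_map N K \<phi> (X \<oplus>\<^bsub>quot_module M Z H\<^esub> Y) =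
        quot_map N K \<phi> X \<oplus>\<^bsub>quot_module N Z' K\<^esub> quot_map N K \<phi> Y"
      by (simp add: quot_module_add[OF M H] quot_module_add[OF N K] coset)
  next
    fix r X assume "r \<in> carrier R" "X \<in> carrier (quot_module M Z H)"
    then obtain x where "r \<in> carrier R" "x \<in> carrier M" "X = H +>\<^bsub>M\<^esub> x"
      using Z unfolding Q by blast
    then show "quot_map N K \<phi> (r \<odot>\<^bsub>quot_module M Z H\<^esub> X) = r \<odot>\<^bsub>quot_module N Z' K\<^esub> quot_map N K \<phi> X"
      by (simp add: quot_module_smult[OF M H] quot_module_smult[OF N K] coset
          module_hom_smult[OF \<phi>])
  qed
qed

lemma quot_map_inj_on:
  assumes Z: "submodule Z R M" and reflect: "\<And>z. z \<in> Z \<Longrightarrow> \<phi> z \<in> K \<Longrightarrow> z \<in> H"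
  shows "inj_on (quot_map N K \<phi>) (carrier (quot_module M Z H))"
proof (rule inj_onI)
  fix X Y assume "X \<in> carrier (quot_module M Z H)" "Y \<in> carrier (quot_module M Z H)"
    and eq: "quot_map N K \<phi> X = quot_map N K \<phi> Y"
  then obtain x y where xy: "x \<in> Z" "y \<in> Z" "X = H +>\<^bsub>M\<^esub> x" "Y = H +>\<^bsub>M\<^esub> y"
    unfolding quot_module_carrier by blast
  then have xyM: "x \<in> carrier M" "y \<in> carrier M" using M.submoduleE(1)[OF Z] by auto
  have "\<phi> (x \<oplus>\<^bsub>M\<^esub> \<ominus>\<^bsub>M\<^esub> y) \<in> K"
    using eq xyM by (simp add: xy quot_map_coset[OF M N H K \<phi> \<phi>_H] coset_eq_iff[OF N K])
  moreover have "x \<oplus>\<^bsub>M\<^esub> \<ominus>\<^bsub>M\<^esub> y \<in> Z"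
    using xy M.submoduleE(3,5)[OF Z] by blast
  ultimately show "X = Y" using reflect xy xyM by (simp add: coset_eq_iff[OF M H])
qed

lemma quot_module_isomorphicI:
  assumes Z: "submodule Z R M" and \<phi>_Z: "\<phi> ` Z = Z'"
    and reflect: "\<And>z. z \<in> Z \<Longrightarrow> \<phi> z \<in> K \<Longrightarrow> z \<in> H"
  shows "module_isomorphic R (quot_module M Z H) (quot_module N Z' K)"
proof -
  have Z_sub: "Z \<subseteq> carrier M" using M.submoduleE(1)[OF Z] .
  let ?h = "quot_map N K \<phi>"
  have hom: "?h \<in> module_hom R (quot_module M Z H) (quot_module N Z' K)"
    using quot_map_hom[OF Z_sub] \<phi>_Z by blast
  have "carrier (quot_module N Z' K) \<subseteq> ?h ` carrier (quot_module M Z H)"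
  proof
    fix Y assume "Y \<in> carrier (quot_module N Z' K)"
    then obtain z where z: "z \<in> Z" "Y = K +>\<^bsub>N\<^esub> \<phi> z"
      using \<phi>_Z unfolding quot_module_carrier by blast
    then have "?h (H +>\<^bsub>M\<^esub> z) = Y"
      using Z_sub by (simp add: quot_map_coset[OF M N H K \<phi> \<phi>_H] subset_eq)
    moreover have "H +>\<^bsub>M\<^esub> z \<in> carrier (quot_module M Z H)"
      using z(1) unfolding quot_module_carrier by blast
    ultimately show "Y \<in> ?h ` carrier (quot_module M Z H)" by blast
  qed
  then show ?thesis
    unfolding module_isomorphic_def bij_betw_def
    using hom module_hom_closed[OF hom] quot_map_inj_on[OF Z reflect] by blast
qed

end

section \<open>Chain complexes\<close>

definition cycles :: "(nat \<Rightarrow> ('r, 'c) module) \<Rightarrow> (nat \<Rightarrow> 'c \<Rightarrow> 'c) \<Rightarrow> nat \<Rightarrow> 'c set" where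
  "cycles C d k = {c \<in> carrier (C k). k = 0 \<or> d (k - 1) c = \<zero>\<^bsub>C (k - 1)\<^esub>}"

definition boundaries :: "(nat \<Rightarrow> ('r, 'c) module) \<Rightarrow> (nat \<Rightarrow> 'c \<Rightarrow> 'c) \<Rightarrow> nat \<Rightarrow> 'c set" where
  "boundaries C d k = d k ` carrier (C (Suc k))"

definition homology ::
  "(nat \<Rightarrow> ('r, 'c) module) \<Rightarrow> (nat \<Rightarrow> 'c \<Rightarrow> 'c) \<Rightarrow> nat \<Rightarrow> ('r, 'c set) module" where
  "homology C d k = quot_module (C k) (cycles C d k) (boundaries C d k)"

lemma cycles_0 [simp]: "cycles C d 0 = carrier (C 0)"
  unfolding cycles_def by simp

lemma cycles_Suc: "cycles C d (Suc k) = {c \<in> carrier (C (Suc k)). d k c = \<zero>\<^bsub>C k\<^esub>}"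
  unfolding cycles_def by simp

locale chain_complex =
  fixes R :: "'r ring" and C :: "nat \<Rightarrow> ('r, 'c) module" and d :: "nat \<Rightarrow> 'c \<Rightarrow> 'c"
  assumes module_C: "module R (C k)"
    and d_hom: "d k \<in> module_hom R (C (Suc k)) (C k)"
    and d_d: "c \<in> carrier (C (Suc (Suc k))) \<Longrightarrow> d k (d (Suc k) c) = \<zero>\<^bsub>C k\<^esub>"
begin

lemma d_group_hom: "abelian_group_hom (C (Suc k)) (C k) (d k)"
  by (rule module_hom_abelian_group_hom[OF module_C module_C d_hom])

lemma cycles_submodule: "submodule (cycles C d k) R (C k)"
proof (cases k)
  case 0
  then show ?thesis using module.carrier_is_submodule[OF module_C] by simp
next
  case (Suc j)
  then show ?thesis
    using module_hom_kernel_submodule[OF module_C module_C d_hom] by (simp add: cycles_Suc)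
qed

lemma cycles_subset: "cycles C d k \<subseteq> carrier (C k)"
  unfolding cycles_def by blast

lemma boundaries_submodule: "submodule (boundaries C d k) R (C k)"
  unfolding boundaries_def by (rule module_hom_image_submodule[OF module_C module_C d_hom])

lemma boundary_in_cycles: "c \<in> carrier (C (Suc k)) \<Longrightarrow> d k c \<in> cycles C d k"
  using module_hom_closed[OF d_hom] by (cases k) (simp_all add: cycles_Suc d_d)

end

locale chain_map =
  src: chain_complex R C d + tgt: chain_complex R C' d'
    for R :: "'r ring" and C :: "nat \<Rightarrow> ('r, 'c) module" and d
      and C' :: "nat \<Rightarrow> ('r, 'c') module" and d' +
  fixes \<Phi> :: "nat \<Rightarrow> 'c \<Rightarrow> 'c'"
  assumes \<Phi>_hom: "\<Phi> k \<in> module_hom R (C k) (C' k)"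
    and \<Phi>_d: "c \<in> carrier (C (Suc k)) \<Longrightarrow> \<Phi> k (d k c) = d' k (\<Phi> (Suc k) c)"
begin

lemma \<Phi>_group_hom: "abelian_group_hom (C k) (C' k) (\<Phi> k)"
  by (rule module_hom_abelian_group_hom[OF src.module_C tgt.module_C \<Phi>_hom])

lemma \<Phi>_cycles: "\<Phi> k ` cycles C d k \<subseteq> cycles C' d' k"
proof (cases k)
  case 0
  then show ?thesis using module_hom_closed[OF \<Phi>_hom] by auto
next
  case (Suc j)
  interpret \<Phi>j: abelian_group_hom "C j" "C' j" "\<Phi> j" by (rule \<Phi>_group_hom)
  show ?thesis
    using Suc module_hom_closed[OF \<Phi>_hom] by (auto simp: cycles_Suc simp flip: \<Phi>_d)
qed

lemma \<Phi>_boundaries: "\<Phi> k ` boundaries C d k \<subseteq> boundaries C' d' k"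
  unfolding boundaries_def using \<Phi>_d module_hom_closed[OF \<Phi>_hom] by auto

end

locale surjective_chain_map_acyclic_kernel = chain_map +
  assumes \<Phi>_surj: "\<Phi> k ` carrier (C k) = carrier (C' k)"
    and kernel_acyclic: "z \<in> cycles C d k \<Longrightarrow> \<Phi> k z = \<zero>\<^bsub>C' k\<^esub> \<Longrightarrow>
      \<exists>e\<in>carrier (C (Suc k)). \<Phi> (Suc k) e = \<zero>\<^bsub>C' (Suc k)\<^esub> \<and> d k e = z"
begin

lemma boundary_if_image_boundary:
  assumes z: "z \<in> cycles C d k" and \<Phi>z: "\<Phi> k z \<in> boundaries C' d' k"
  shows "z \<in> boundaries C d k"
proof -
  interpret C: module R "C k" by (rule src.module_C)
  interpret C': module R "C' k" by (rule tgt.module_C)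
  interpret \<Phi>: abelian_group_hom "C k" "C' k" "\<Phi> k" by (rule \<Phi>_group_hom)
  interpret dk: abelian_group_hom "C (Suc k)" "C k" "d k" by (rule src.d_group_hom)
  obtain q where q: "q \<in> carrier (C' (Suc k))" "\<Phi> k z = d' k q"
    using \<Phi>z unfolding boundaries_def by blast
  obtain c where c: "c \<in> carrier (C (Suc k))" "q = \<Phi> (Suc k) c"
    using \<Phi>_surj[of "Suc k"] q(1) by blast
  have zC: "z \<in> carrier (C k)" using z src.cycles_subset by blast
  define z0 where "z0 = z \<oplus>\<^bsub>C k\<^esub> \<ominus>\<^bsub>C k\<^esub> d k c"
  have "z0 \<in> cycles C d k"
    unfolding z0_def using z src.boundary_in_cycles[OF c(1)] C.submoduleE(3,5)[OF src.cycles_submodule]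
    by blast
  moreover have "\<Phi> k z0 = \<zero>\<^bsub>C' k\<^esub>"
    unfolding z0_def using zC c q
    by (simp add: \<Phi>_d module_hom_closed[OF \<Phi>_hom] module_hom_closed[OF tgt.d_hom] C'.r_neg)
  ultimately obtain e where e: "e \<in> carrier (C (Suc k))" "d k e = z0" using kernel_acyclic by blast
  have "d k (e \<oplus>\<^bsub>C (Suc k)\<^esub> c) = z"
    using e c zC unfolding z0_def by (simp add: C.a_assoc C.l_neg)
  then show ?thesis
    unfolding boundaries_def using e(1) c(1) by (metis dk.G.add.m_closed image_eqI)
qed

lemma cycles_image: "\<Phi> k ` cycles C d k = cycles C' d' k"
proof
  show "\<Phi> k ` cycles C d k \<subseteq> cycles C' d' k" by (rule \<Phi>_cycles)
  show "cycles C' d' k \<subseteq> \<Phi> k ` cycles C d k"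
  proof
    fix z' assume z': "z' \<in> cycles C' d' k"
    then have "z' \<in> \<Phi> k ` carrier (C k)" using tgt.cycles_subset \<Phi>_surj by auto
    then obtain c where c: "c \<in> carrier (C k)" "\<Phi> k c = z'" by blast
    show "z' \<in> \<Phi> k ` cycles C d k"
    proof (cases k)
      case 0
      then show ?thesis using c by auto
    next
      case (Suc j)
      interpret \<Phi>: abelian_group_hom "C (Suc j)" "C' (Suc j)" "\<Phi> (Suc j)" by (rule \<Phi>_group_hom)
      interpret dj: abelian_group_hom "C (Suc j)" "C j" "d j" by (rule src.d_group_hom)
      have cS: "c \<in> carrier (C (Suc j))" using c(1) Suc by simp
      have "d j c \<in> cycles C d j" by (rule src.boundary_in_cycles[OF cS])
      moreover have "\<Phi> j (d j c) = \<zero>\<^bsub>C' j\<^esub>"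
        using \<Phi>_d[OF cS] z' c(2) Suc by (simp add: cycles_Suc)
      ultimately obtain e where e: "e \<in> carrier (C (Suc j))" "\<Phi> (Suc j) e = \<zero>\<^bsub>C' (Suc j)\<^esub>" "d j e = d j c"
        using kernel_acyclic by blast
      have "c \<oplus>\<^bsub>C (Suc j)\<^esub> \<ominus>\<^bsub>C (Suc j)\<^esub> e \<in> cycles C d (Suc j)"
        using cS e by (simp add: cycles_Suc dj.H.r_neg)
      moreover have "\<Phi> (Suc j) (c \<oplus>\<^bsub>C (Suc j)\<^esub> \<ominus>\<^bsub>C (Suc j)\<^esub> e) = z'"
        using cS c(2) e z' tgt.cycles_subset Suc by auto
      ultimately show ?thesis using Suc by blast
    qed
  qed
qed

theorem homology_isomorphic: "module_isomorphic R (homology C d k) (homology C' d' k)"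
  unfolding homology_def
  by (rule quot_module_isomorphicI[OF src.module_C tgt.module_C src.boundaries_submodule
        tgt.boundaries_submodule \<Phi>_hom \<Phi>_boundaries src.cycles_submodule cycles_image
        boundary_if_image_boundary])

end

section \<open>Cellular chains of a sheaf on a Boolean lattice\<close>

lemma cell_chains_carrier:
  "c \<in> carrier (cell_chains S G k) \<longleftrightarrow>
    (\<forall>x. x \<subseteq> S \<and> card x = k \<longrightarrow> c x \<in> carrier (G x)) \<and>
    (\<forall>x. \<not> (x \<subseteq> S \<and> card x = k) \<longrightarrow> c x = undefined)"
  unfolding cell_chains_def by simp

lemma cell_chains_mem:
  "c \<in> carrier (cell_chains S G k) \<Longrightarrow> x \<subseteq> S \<Longrightarrow> card x = k \<Longrightarrow> c x \<in> carrier (G x)"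
  unfolding cell_chains_carrier by blast

lemma cell_chains_eqI:
  assumes "c \<in> carrier (cell_chains S G k)" "c' \<in> carrier (cell_chains S G k)"
    and "\<And>x. x \<subseteq> S \<Longrightarrow> card x = k \<Longrightarrow> c x = c' x"
  shows "c = c'"
  using assms unfolding cell_chains_carrier by (metis ext)

lemma cell_chains_add:
  "x \<subseteq> S \<Longrightarrow> card x = k \<Longrightarrow> (c \<oplus>\<^bsub>cell_chains S G k\<^esub> c') x = c x \<oplus>\<^bsub>G x\<^esub> c' x"
  unfolding cell_chains_def by simp

lemma cell_chains_smult:
  "x \<subseteq> S \<Longrightarrow> card x = k \<Longrightarrow> (r \<odot>\<^bsub>cell_chains S G k\<^esub> c) x = r \<odot>\<^bsub>G x\<^esub> c x"
  unfolding cell_chains_def by simp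

lemma cell_chains_zero:
  "x \<subseteq> S \<Longrightarrow> card x = k \<Longrightarrow> \<zero>\<^bsub>cell_chains S G k\<^esub> x = \<zero>\<^bsub>G x\<^esub>"
  unfolding cell_chains_def by simp

lemma cell_chains_eval_hom:
  "y \<subseteq> S \<Longrightarrow> card y = k \<Longrightarrow> (\<lambda>c. c y) \<in> module_hom R (cell_chains S G k) (G y)"
  unfolding module_hom_def by (simp add: cell_chains_mem cell_chains_add cell_chains_smult Pi_iff)

lemma cell_chains_module:
  assumes G: "\<And>x. x \<subseteq> S \<Longrightarrow> module R (G x)"
  shows "module R (cell_chains S G k)"
proof -
  note am = abelian_group.axioms(1)[OF module.axioms(2)[OF G]]
  note ag = abelian_monoid.a_ac[OF am] abelian_monoid.a_closed[OF am] abelian_monoid.zero_closed[OF am]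
    abelian_monoid.l_zero[OF am] abelian_monoid.r_zero[OF am]
  note md = module.smult_closed[OF G] module.smult_l_distr[OF G] module.smult_r_distr[OF G]
    module.smult_assoc1[OF G] module.smult_one[OF G]
  have "abelian_group (cell_chains S G k)"
  proof (rule abelian_groupI)
    fix c assume c: "c \<in> carrier (cell_chains S G k)"
    let ?n = "\<lambda>x. if x \<subseteq> S \<and> card x = k then \<ominus>\<^bsub>G x\<^esub> c x else undefined"
    have "?n \<in> carrier (cell_chains S G k)"
      using c abelian_group.a_inv_closed[OF module.axioms(2)[OF G]] by (simp add: cell_chains_def)
    moreover have "?n \<oplus>\<^bsub>cell_chains S G k\<^esub> c = \<zero>\<^bsub>cell_chains S G k\<^esub>"
      using c abelian_group.l_neg[OF module.axioms(2)[OF G]] by (auto simp: cell_chains_def fun_eq_iff)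
    ultimately show "\<exists>c'\<in>carrier (cell_chains S G k). c' \<oplus>\<^bsub>cell_chains S G k\<^esub> c = \<zero>\<^bsub>cell_chains S G k\<^esub>" by blast
  qed (auto simp: cell_chains_def fun_eq_iff ag)
  moreover have "cring R" using G[of "{}"] module.axioms(1) by blast
  ultimately show ?thesis
    by (intro moduleI)
       (auto simp: cell_chains_def fun_eq_iff md)
qed

abbreviation minus_one_pow :: "('a, 'b) ring_scheme \<Rightarrow> nat \<Rightarrow> 'a" where
  "minus_one_pow R n \<equiv> (\<ominus>\<^bsub>R\<^esub> \<one>\<^bsub>R\<^esub>) [^]\<^bsub>R\<^esub> n"

definition boundary_term ::
  "'r ring \<Rightarrow> ('a::linorder set \<Rightarrow> ('r, 'm) module) \<Rightarrow> ('a set \<Rightarrow> 'a set \<Rightarrow> 'm \<Rightarrow> 'm)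
    \<Rightarrow> ('a set \<Rightarrow> 'm) \<Rightarrow> 'a set \<Rightarrow> 'a \<Rightarrow> 'm" where
  "boundary_term R G g c y b =
    minus_one_pow R (card {b' \<in> insert b y. b' < b}) \<odot>\<^bsub>G y\<^esub> g (insert b y) y (c (insert b y))"

lemma cell_diff_apply:
  "y \<subseteq> S \<Longrightarrow> card y = k \<Longrightarrow> cell_diff R S G g k c y = finsum (G y) (boundary_term R G g c y) (S - y)"
  unfolding cell_diff_def boundary_term_def by simp

lemma cell_diff_undefined: "\<not> (y \<subseteq> S \<and> card y = k) \<Longrightarrow> cell_diff R S G g k c y = undefined"
  unfolding cell_diff_def by auto

lemma (in abelian_group) finsum_off_diagonal_insert:
  assumes D: "finite D" "x \<notin> D"
    and T: "\<And>b b'. b \<in> insert x D \<Longrightarrow> b' \<in> insert x D \<Longrightarrow> b \<noteq> b' \<Longrightarrow> T b b' \<in> carrier G"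
  shows "(\<Oplus>b\<in>insert x D. \<Oplus>b'\<in>insert x D - {b}. T b b') =
    (\<Oplus>b\<in>D. T x b \<oplus> T b x) \<oplus> (\<Oplus>b\<in>D. \<Oplus>b'\<in>D - {b}. T b b')"
proof -
  have T_Pi: "T b \<in> E \<rightarrow> carrier G" if "b \<in> insert x D" "E \<subseteq> insert x D - {b}" for b E
    using that by (intro Pi_I T) auto
  have sums: "(\<Oplus>b'\<in>E. T b b') \<in> carrier G" if "b \<in> insert x D" "E \<subseteq> insert x D - {b}" for b E
    using T_Pi[OF that] by (rule finsum_closed)
  have "(\<Oplus>b\<in>D. \<Oplus>b'\<in>insert x D - {b}. T b b') = (\<Oplus>b\<in>D. T b x \<oplus> (\<Oplus>b'\<in>D - {b}. T b b'))"
  proof (rule finsum_cong'[OF refl])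
    fix b assume "b \<in> D"
    then have "insert x D - {b} = insert x (D - {b})" "x \<notin> D - {b}" using D by auto
    then show "(\<Oplus>b'\<in>insert x D - {b}. T b b') = T b x \<oplus> (\<Oplus>b'\<in>D - {b}. T b b')"
      using D \<open>b \<in> D\<close> by (simp only:) (rule finsum_insert; auto intro: T T_Pi)
  next
    show "(\<lambda>b. T b x \<oplus> (\<Oplus>b'\<in>D - {b}. T b b')) \<in> D \<rightarrow> carrier G"
      using D by (intro Pi_I a_closed T sums) auto
  qed
  also have "\<dots> = (\<Oplus>b\<in>D. T b x) \<oplus> (\<Oplus>b\<in>D. \<Oplus>b'\<in>D - {b}. T b b')"
    using D by (intro finsum_addf Pi_I T sums) auto
  finally have "(\<Oplus>b\<in>insert x D. \<Oplus>b'\<in>insert x D - {b}. T b b') =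
      (\<Oplus>b\<in>D. T x b) \<oplus> ((\<Oplus>b\<in>D. T b x) \<oplus> (\<Oplus>b\<in>D. \<Oplus>b'\<in>D - {b}. T b b'))"
    using D sums by (simp add: finsum_insert Pi_iff insert_Diff_if)
  also have "\<dots> = (\<Oplus>b\<in>D. T x b \<oplus> T b x) \<oplus> (\<Oplus>b\<in>D. \<Oplus>b'\<in>D - {b}. T b b')"
  proof -
    have "T x \<in> D \<rightarrow> carrier G" "(\<lambda>b. T b x) \<in> D \<rightarrow> carrier G"
      "(\<lambda>b. \<Oplus>b'\<in>D - {b}. T b b') \<in> D \<rightarrow> carrier G"
      using D by (auto intro!: T sums)
    then show ?thesis by (simp add: a_assoc finsum_addf)
  qed
  finally show ?thesis .
qed

lemma (in abelian_group) finsum_antisymmetric_eq_zero: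
  assumes "finite D"
    and closed: "\<And>b b'. b \<in> D \<Longrightarrow> b' \<in> D \<Longrightarrow> b \<noteq> b' \<Longrightarrow> T b b' \<in> carrier G"
    and antisym: "\<And>b b'. b \<in> D \<Longrightarrow> b' \<in> D \<Longrightarrow> b \<noteq> b' \<Longrightarrow> T b b' = \<ominus> T b' b"
  shows "(\<Oplus>b\<in>D. \<Oplus>b'\<in>D - {b}. T b b') = \<zero>"
  using assms
proof (induction D rule: finite_induct)
  case empty
  show ?case by simp
next
  case (insert x D)
  have "T x b \<oplus> T b x = \<zero>" if "b \<in> D" for b
  proof -
    have "b \<noteq> x" using insert.hyps that by blast
    then show ?thesis using insert.prems(2)[of x b] insert.prems(1)[of b x] that by (simp add: l_neg)
  qed
  then have "(\<Oplus>b\<in>D. T x b \<oplus> T b x) = (\<Oplus>b\<in>D. \<zero>)"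
    by (intro finsum_cong') auto
  then have "(\<Oplus>b\<in>D. T x b \<oplus> T b x) = \<zero>" by simp
  moreover have "(\<Oplus>b\<in>D. \<Oplus>b'\<in>D - {b}. T b b') = \<zero>"
    by (rule insert.IH) (use insert.prems in blast)+
  ultimately show ?case
    using finsum_off_diagonal_insert[OF insert.hyps insert.prems(1)] by simp
qed

lemma card_less_insert:
  fixes b c :: "'a::linorder"
  assumes "finite v" "b \<notin> v"
  shows "card {x \<in> insert b v. x < c} = card {x \<in> v. x < c} + (if b < c then 1 else 0)"
proof -
  have "{x \<in> insert b v. x < c} = (if b < c then insert b {x \<in> v. x < c} else {x \<in> v. x < c})"
    by auto
  then show ?thesis using assms by simp
qed

(* Deleting b and b' from insert b' (insert b v) in the two possible orders gives opposite
   signs; this is what makes d o d vanish. *)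
lemma (in cring) minus_one_pow_swap:
  fixes b b' :: "'c::linorder"
  assumes "finite v" "b \<notin> v" "b' \<notin> v" "b \<noteq> b'"
  shows "minus_one_pow R (card {x \<in> insert b v. x < b}) \<otimes> minus_one_pow R (card {x \<in> insert b' (insert b v). x < b'}) =
    \<ominus> (minus_one_pow R (card {x \<in> insert b' v. x < b'}) \<otimes> minus_one_pow R (card {x \<in> insert b (insert b' v). x < b}))"
proof -
  have self: "{x \<in> insert c u. x < c} = {x \<in> u. x < c}" for c :: 'c and u by auto
  have card: "card {x \<in> insert b v. x < b} = card {x \<in> v. x < b}"
    "card {x \<in> insert b' v. x < b'} = card {x \<in> v. x < b'}"
    "card {x \<in> insert b' (insert b v). x < b'} = card {x \<in> v. x < b'} + (if b < b' then 1 else 0)"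
    "card {x \<in> insert b (insert b' v). x < b} = card {x \<in> v. x < b} + (if b' < b then 1 else 0)"
    unfolding self using card_less_insert[OF assms(1)] assms(2,3) by simp_all
  have "b < b' \<or> b' < b" using assms(4) by auto
  then show ?thesis
    unfolding card by (auto simp: nat_pow_mult r_minus add.commute)
qed

lemma (in cring) minus_one_pow_square: "minus_one_pow R n \<otimes> minus_one_pow R n = \<one>"
  by (simp add: nat_pow_distrib[symmetric] l_minus r_minus)

definition double_boundary_term ::
  "'r ring \<Rightarrow> ('a::linorder set \<Rightarrow> ('r, 'm) module) \<Rightarrow> ('a set \<Rightarrow> 'a set \<Rightarrow> 'm \<Rightarrow> 'm)
    \<Rightarrow> ('a set \<Rightarrow> 'm) \<Rightarrow> 'a set \<Rightarrow> 'a \<Rightarrow> 'a \<Rightarrow> 'm" where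
  "double_boundary_term R G g c v b b' =
    (minus_one_pow R (card {x \<in> insert b v. x < b}) \<otimes>\<^bsub>R\<^esub>
     minus_one_pow R (card {x \<in> insert b' (insert b v). x < b'}))
    \<odot>\<^bsub>G v\<^esub> g (insert b' (insert b v)) v (c (insert b' (insert b v)))"

locale cellular_sheaf =
  fixes R :: "'r ring" and S :: "'a::linorder set"
    and G :: "'a set \<Rightarrow> ('r, 'm) module" and g :: "'a set \<Rightarrow> 'a set \<Rightarrow> 'm \<Rightarrow> 'm"
  assumes sheaf: "is_sheaf R S G g" and finite_S: "finite S"
begin

lemma module_G: "x \<subseteq> S \<Longrightarrow> module R (G x)"
  using sheaf unfolding is_sheaf_def by (elim conjE) simp

lemma g_hom: "x \<subseteq> y \<Longrightarrow> y \<subseteq> S \<Longrightarrow> g y x \<in> module_hom R (G y) (G x)"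
  using sheaf unfolding is_sheaf_def by (elim conjE) simp

lemma g_closed: "x \<subseteq> y \<Longrightarrow> y \<subseteq> S \<Longrightarrow> v \<in> carrier (G y) \<Longrightarrow> g y x v \<in> carrier (G x)"
  using module_hom_closed[OF g_hom] .

lemma g_id: "x \<subseteq> S \<Longrightarrow> v \<in> carrier (G x) \<Longrightarrow> g x x v = v"
  using sheaf unfolding is_sheaf_def by (elim conjE) simp

lemma g_comp:
  "x \<subseteq> y \<Longrightarrow> y \<subseteq> z \<Longrightarrow> z \<subseteq> S \<Longrightarrow> v \<in> carrier (G z) \<Longrightarrow> g y x (g z y v) = g z x v"
  using sheaf unfolding is_sheaf_def by (elim conjE) simp

lemma cring_R: "cring R"
  using module_G[of "{}"] module.axioms(1) by blast

lemma minus_one_pow_closed: "minus_one_pow R n \<in> carrier R"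
  using cring_R by (simp add: cring.cring_simprules(3) monoid.nat_pow_closed cring_def ring_def)

lemma module_chains: "module R (cell_chains S G k)"
  by (rule cell_chains_module[OF module_G])

lemma insert_cell:
  assumes "y \<subseteq> S" "card y = k" "b \<in> S - y"
  shows "insert b y \<subseteq> S" "card (insert b y) = Suc k"
  using assms finite_subset[OF assms(1) finite_S] by auto

lemma boundary_term_closed:
  assumes c: "c \<in> carrier (cell_chains S G (Suc k))" and y: "y \<subseteq> S" "card y = k" and b: "b \<in> S - y"
  shows "boundary_term R G g c y b \<in> carrier (G y)"
proof -
  note yb = insert_cell[OF y b]
  have "g (insert b y) y (c (insert b y)) \<in> carrier (G y)"
    using module_hom_closed[OF g_hom cell_chains_mem[OF c yb]] yb by blast
  then show ?thesis
    unfolding boundary_term_def using module.smult_closed[OF module_G[OF y(1)] minus_one_pow_closed] by blast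
qed

lemma cell_diff_closed:
  assumes c: "c \<in> carrier (cell_chains S G (Suc k))"
  shows "cell_diff R S G g k c \<in> carrier (cell_chains S G k)"
proof -
  have "cell_diff R S G g k c y \<in> carrier (G y)" if y: "y \<subseteq> S" "card y = k" for y
  proof -
    interpret Gy: module R "G y" by (rule module_G[OF y(1)])
    show ?thesis
      unfolding cell_diff_apply[OF y] using boundary_term_closed[OF c y] by (simp add: Pi_iff)
  qed
  then show ?thesis unfolding cell_chains_carrier by (simp add: cell_diff_undefined)
qed

lemma boundary_term_add:
  assumes c: "c \<in> carrier (cell_chains S G (Suc k))" "c' \<in> carrier (cell_chains S G (Suc k))"
    and y: "y \<subseteq> S" "card y = k" and b: "b \<in> S - y"
  shows "boundary_term R G g (c \<oplus>\<^bsub>cell_chains S G (Suc k)\<^esub> c') y b =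
    boundary_term R G g c y b \<oplus>\<^bsub>G y\<^esub> boundary_term R G g c' y b"
proof -
  interpret Gy: module R "G y" by (rule module_G[OF y(1)])
  note yb = insert_cell[OF y b]
  have h: "g (insert b y) y \<in> module_hom R (G (insert b y)) (G y)" using g_hom[OF _ yb(1)] by blast
  note cb = cell_chains_mem[OF c(1) yb] cell_chains_mem[OF c(2) yb]
  show ?thesis
    unfolding boundary_term_def cell_chains_add[OF yb] module_hom_add[OF h cb]
    using module_hom_closed[OF h] cb by (simp add: Gy.smult_r_distr minus_one_pow_closed)
qed

lemma boundary_term_smult:
  assumes r: "r \<in> carrier R" and c: "c \<in> carrier (cell_chains S G (Suc k))"
    and y: "y \<subseteq> S" "card y = k" and b: "b \<in> S - y"
  shows "boundary_term R G g (r \<odot>\<^bsub>cell_chains S G (Suc k)\<^esub> c) y b = r \<odot>\<^bsub>G y\<^esub> boundary_term R G g c y b"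
proof -
  interpret Gy: module R "G y" by (rule module_G[OF y(1)])
  note yb = insert_cell[OF y b]
  have h: "g (insert b y) y \<in> module_hom R (G (insert b y)) (G y)" using g_hom[OF _ yb(1)] by blast
  note cb = cell_chains_mem[OF c yb]
  have v: "g (insert b y) y (c (insert b y)) \<in> carrier (G y)" using module_hom_closed[OF h cb] .
  show ?thesis
    unfolding boundary_term_def cell_chains_smult[OF yb] module_hom_smult[OF h r cb]
    using v r minus_one_pow_closed by (simp flip: Gy.smult_assoc1 add: Gy.m_comm)
qed

lemma cell_diff_add:
  assumes c: "c \<in> carrier (cell_chains S G (Suc k))" "c' \<in> carrier (cell_chains S G (Suc k))"
  shows "cell_diff R S G g k (c \<oplus>\<^bsub>cell_chains S G (Suc k)\<^esub> c') =
    cell_diff R S G g k c \<oplus>\<^bsub>cell_chains S G k\<^esub> cell_diff R S G g k c'"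
proof (rule cell_chains_eqI[where G = G])
  fix y assume y: "y \<subseteq> S" "card y = k"
  interpret Gy: module R "G y" by (rule module_G[OF y(1)])
  note closed = boundary_term_closed[OF c(1) y] boundary_term_closed[OF c(2) y]
  have "finsum (G y) (boundary_term R G g (c \<oplus>\<^bsub>cell_chains S G (Suc k)\<^esub> c') y) (S - y) =
      finsum (G y) (\<lambda>b. boundary_term R G g c y b \<oplus>\<^bsub>G y\<^esub> boundary_term R G g c' y b) (S - y)"
    using closed by (intro Gy.finsum_cong') (simp_all add: boundary_term_add[OF c y] Pi_iff)
  also have "\<dots> = finsum (G y) (boundary_term R G g c y) (S - y) \<oplus>\<^bsub>G y\<^esub>
      finsum (G y) (boundary_term R G g c' y) (S - y)"
    using closed by (intro Gy.finsum_addf) (simp_all add: Pi_iff)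
  finally show "cell_diff R S G g k (c \<oplus>\<^bsub>cell_chains S G (Suc k)\<^esub> c') y =
      (cell_diff R S G g k c \<oplus>\<^bsub>cell_chains S G k\<^esub> cell_diff R S G g k c') y"
    by (simp only: cell_chains_add[OF y] cell_diff_apply[OF y])
qed (use c in \<open>simp_all add: cell_diff_closed abelian_groupE(1)[OF module.axioms(2)[OF module_chains]]\<close>)

lemma cell_diff_smult:
  assumes r: "r \<in> carrier R" and c: "c \<in> carrier (cell_chains S G (Suc k))"
  shows "cell_diff R S G g k (r \<odot>\<^bsub>cell_chains S G (Suc k)\<^esub> c) = r \<odot>\<^bsub>cell_chains S G k\<^esub> cell_diff R S G g k c"
proof (rule cell_chains_eqI[where G = G])
  fix y assume y: "y \<subseteq> S" "card y = k"
  interpret Gy: module R "G y" by (rule module_G[OF y(1)])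
  show "cell_diff R S G g k (r \<odot>\<^bsub>cell_chains S G (Suc k)\<^esub> c) y =
      (r \<odot>\<^bsub>cell_chains S G k\<^esub> cell_diff R S G g k c) y"
    unfolding cell_chains_smult[OF y] cell_diff_apply[OF y]
    using boundary_term_closed[OF c y] finite_S r
    by (subst Gy.finsum_smult_ldistr) (auto simp: boundary_term_smult[OF r c y] intro: Gy.finsum_cong')
qed (use r c in \<open>simp_all add: cell_diff_closed module.smult_closed[OF module_chains]\<close>)

lemma cell_diff_hom: "cell_diff R S G g k \<in> module_hom R (cell_chains S G (Suc k)) (cell_chains S G k)"
  unfolding module_hom_def using cell_diff_closed cell_diff_add cell_diff_smult by blast

lemma restrict_codim2_closed:
  assumes c: "c \<in> carrier (cell_chains S G (Suc (Suc k)))" and v: "v \<subseteq> S" "card v = k"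
    and b: "b \<in> S - v" "b' \<in> S - v" "b \<noteq> b'"
  shows "g (insert b' (insert b v)) v (c (insert b' (insert b v))) \<in> carrier (G v)"
proof -
  note vb = insert_cell[OF v b(1)]
  note vbb = insert_cell[OF vb, of b']
  show ?thesis
    using b module_hom_closed[OF g_hom cell_chains_mem[OF c vbb]] vbb by blast
qed

lemma double_boundary_term_closed:
  assumes c: "c \<in> carrier (cell_chains S G (Suc (Suc k)))" and v: "v \<subseteq> S" "card v = k"
    and b: "b \<in> S - v" "b' \<in> S - v" "b \<noteq> b'"
  shows "double_boundary_term R G g c v b b' \<in> carrier (G v)"
  unfolding double_boundary_term_def
  using module.smult_closed[OF module_G[OF v(1)]] restrict_codim2_closed[OF c v b]
    minus_one_pow_closed cring.cring_simprules(5)[OF cring_R]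
  by blast

lemma double_boundary_term_antisym:
  assumes c: "c \<in> carrier (cell_chains S G (Suc (Suc k)))" and v: "v \<subseteq> S" "card v = k"
    and b: "b \<in> S - v" "b' \<in> S - v" "b \<noteq> b'"
  shows "double_boundary_term R G g c v b b' = \<ominus>\<^bsub>G v\<^esub> double_boundary_term R G g c v b' b"
proof -
  interpret R: cring R by (rule cring_R)
  interpret Gv: module R "G v" by (rule module_G[OF v(1)])
  have "insert b (insert b' v) = insert b' (insert b v)" by blast
  then show ?thesis
    unfolding double_boundary_term_def
    using R.minus_one_pow_swap[OF finite_subset[OF v(1) finite_S], of b b'] b
      restrict_codim2_closed[OF c v b]
    by (simp add: Gv.smult_l_minus)
qed

lemma double_boundary_term_eq:
  assumes c: "c \<in> carrier (cell_chains S G (Suc (Suc k)))" and v: "v \<subseteq> S" "card v = k"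
    and b: "b \<in> S - v" and b': "b' \<in> S - insert b v"
  shows "minus_one_pow R (card {x \<in> insert b v. x < b}) \<odot>\<^bsub>G v\<^esub> g (insert b v) v (boundary_term R G g c (insert b v) b') =
    double_boundary_term R G g c v b b'"
proof -
  interpret Gv: module R "G v" by (rule module_G[OF v(1)])
  note vb = insert_cell[OF v b]
  note vbb = insert_cell[OF vb b']
  have g: "g (insert b v) v \<in> module_hom R (G (insert b v)) (G v)" using g_hom[OF _ vb(1)] by blast
  have cb': "c (insert b' (insert b v)) \<in> carrier (G (insert b' (insert b v)))" by (rule cell_chains_mem[OF c vbb])
  have "g (insert b v) v (boundary_term R G g c (insert b v) b') =
      minus_one_pow R (card {x \<in> insert b' (insert b v). x < b'}) \<odot>\<^bsub>G v\<^esub>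
        g (insert b' (insert b v)) v (c (insert b' (insert b v)))"
    unfolding boundary_term_def
    using module_hom_smult[OF g minus_one_pow_closed module_hom_closed[OF g_hom cb']] vbb
    by (simp add: g_comp[OF _ _ vbb(1) cb'] subset_insertI)
  moreover have "b' \<in> S - v" "b \<noteq> b'" using b' by auto
  ultimately show ?thesis
    unfolding double_boundary_term_def
    using restrict_codim2_closed[OF c v b] minus_one_pow_closed
    by (simp add: Gv.smult_assoc1)
qed

lemma boundary_term_cell_diff:
  assumes c: "c \<in> carrier (cell_chains S G (Suc (Suc k)))" and v: "v \<subseteq> S" "card v = k"
    and b: "b \<in> S - v"
  shows "boundary_term R G g (cell_diff R S G g (Suc k) c) v b =
    finsum (G v) (double_boundary_term R G g c v b) (S - v - {b})"
proof -
  interpret Gv: module R "G v" by (rule module_G[OF v(1)])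
  note vb = insert_cell[OF v b]
  let ?y = "insert b v" and ?s = "minus_one_pow R (card {x \<in> insert b v. x < b})"
  have g: "g ?y v \<in> module_hom R (G ?y) (G v)" using g_hom[OF _ vb(1)] by blast
  have "boundary_term R G g (cell_diff R S G g (Suc k) c) v b =
      ?s \<odot>\<^bsub>G v\<^esub> g ?y v (finsum (G ?y) (boundary_term R G g c ?y) (S - ?y))"
    unfolding boundary_term_def[of _ _ _ "cell_diff R S G g (Suc k) c"] cell_diff_apply[OF vb] ..
  also have "\<dots> = ?s \<odot>\<^bsub>G v\<^esub> finsum (G v) (\<lambda>b'. g ?y v (boundary_term R G g c ?y b')) (S - ?y)"
    using boundary_term_closed[OF c vb] finite_S
    by (subst module_hom_finsum[OF module_G[OF vb(1)] module_G[OF v(1)] g]) auto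
  also have "\<dots> = finsum (G v) (\<lambda>b'. ?s \<odot>\<^bsub>G v\<^esub> g ?y v (boundary_term R G g c ?y b')) (S - ?y)"
    using boundary_term_closed[OF c vb] finite_S module_hom_closed[OF g] minus_one_pow_closed
    by (intro Gv.finsum_smult_ldistr) auto
  also have "\<dots> = finsum (G v) (double_boundary_term R G g c v b) (S - ?y)"
  proof (rule Gv.finsum_cong'[OF refl])
    show "double_boundary_term R G g c v b \<in> S - ?y \<rightarrow> carrier (G v)"
      using double_boundary_term_closed[OF c v b] by blast
  qed (rule double_boundary_term_eq[OF c v b])
  also have "S - ?y = S - v - {b}" by blast
  finally show ?thesis .
qed

lemma cell_diff_cell_diff:
  assumes c: "c \<in> carrier (cell_chains S G (Suc (Suc k)))"
  shows "cell_diff R S G g k (cell_diff R S G g (Suc k) c) = \<zero>\<^bsub>cell_chains S G k\<^esub>"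
proof (rule cell_chains_eqI[where G = G])
  fix v assume v: "v \<subseteq> S" "card v = k"
  interpret Gv: module R "G v" by (rule module_G[OF v(1)])
  have sums: "(\<lambda>b. finsum (G v) (double_boundary_term R G g c v b) (S - v - {b})) \<in> S - v \<rightarrow> carrier (G v)"
    using double_boundary_term_closed[OF c v] by (intro Pi_I Gv.finsum_closed) blast
  have "cell_diff R S G g k (cell_diff R S G g (Suc k) c) v =
      (\<Oplus>\<^bsub>G v\<^esub>b\<in>S - v. finsum (G v) (double_boundary_term R G g c v b) (S - v - {b}))"
    unfolding cell_diff_apply[OF v]
    by (rule Gv.finsum_cong'[OF refl sums]) (rule boundary_term_cell_diff[OF c v])
  also have "\<dots> = \<zero>\<^bsub>G v\<^esub>"
    using finite_S
    by (intro Gv.finsum_antisymmetric_eq_zero double_boundary_term_closed[OF c v]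
        double_boundary_term_antisym[OF c v]) simp_all
  finally show "cell_diff R S G g k (cell_diff R S G g (Suc k) c) v = \<zero>\<^bsub>cell_chains S G k\<^esub> v"
    by (simp add: cell_chains_zero[OF v])
qed (use c in \<open>simp_all add: cell_diff_closed abelian_groupE(2)[OF module.axioms(2)[OF module_chains]]\<close>)

sublocale chain_complex R "cell_chains S G" "cell_diff R S G g"
  by (intro chain_complex.intro module_chains cell_diff_hom cell_diff_cell_diff)

end

lemma HC_eq_homology: "HC R S G g k = homology (cell_chains S G) (cell_diff R S G g) k"
  unfolding HC_def homology_def cell_cycles_def cycles_def cell_boundaries_def boundaries_def ..

section \<open>The quotient sheaf and the projection of chains\<close>

locale point_quotient = F: cellular_sheaf R A F f
  for R :: "'r ring" and A :: "'a::linorder set"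
    and F :: "'a set \<Rightarrow> ('r, 'm) module" and f :: "'a set \<Rightarrow> 'a set \<Rightarrow> 'm \<Rightarrow> 'm" +
  fixes a :: 'a
  assumes a_in_A: "a \<in> A"
begin

abbreviation Fq :: "'a set \<Rightarrow> ('r, 'm set) module" where "Fq \<equiv> quot_sheaf F f a"
abbreviation fq :: "'a set \<Rightarrow> 'a set \<Rightarrow> 'm set \<Rightarrow> 'm set" where "fq \<equiv> quot_sheaf_map F f a"

definition Fa_image :: "'a set \<Rightarrow> 'm set" where
  "Fa_image y = f (insert a y) y ` carrier (F (insert a y))"

lemma quot_sheaf_eq: "Fq y = quot_module (F y) (carrier (F y)) (Fa_image y)"
  unfolding quot_sheaf_def Fa_image_def ..

lemma quot_sheaf_map_eq: "fq y x = quot_map (F x) (Fa_image x) (f y x)"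
  unfolding quot_sheaf_map_def quot_map_def Fa_image_def ..

lemma insert_a_subset: "y \<subseteq> A - {a} \<Longrightarrow> insert a y \<subseteq> A"
  using a_in_A by blast

lemma Fa_image_submodule: "y \<subseteq> A - {a} \<Longrightarrow> submodule (Fa_image y) R (F y)"
  unfolding Fa_image_def
  using module_hom_image_submodule[OF F.module_G F.module_G F.g_hom] insert_a_subset by blast

lemma f_Fa_image:
  assumes "x \<subseteq> y" "y \<subseteq> A - {a}"
  shows "f y x ` Fa_image y \<subseteq> Fa_image x"
proof
  fix n assume "n \<in> f y x ` Fa_image y"
  then obtain u where u: "u \<in> carrier (F (insert a y))" "n = f y x (f (insert a y) y u)"
    unfolding Fa_image_def by blast
  have ay: "insert a y \<subseteq> A" using insert_a_subset[OF assms(2)] .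
  have "n = f (insert a y) x u" using F.g_comp[OF assms(1) subset_insertI ay u(1)] u(2) by simp
  also have "\<dots> = f (insert a x) x (f (insert a y) (insert a x) u)"
    using F.g_comp[OF subset_insertI insert_mono[OF assms(1)] ay u(1)] by simp
  finally show "n \<in> Fa_image x"
    unfolding Fa_image_def using module_hom_closed[OF F.g_hom u(1)] assms ay by blast
qed

lemma quot_sheaf_map_coset:
  assumes "x \<subseteq> y" "y \<subseteq> A - {a}" "v \<in> carrier (F y)"
  shows "fq y x (Fa_image y +>\<^bsub>F y\<^esub> v) = Fa_image x +>\<^bsub>F x\<^esub> f y x v"
  unfolding quot_sheaf_map_eq using assms
  by (intro quot_map_coset[where R = R] F.module_G F.g_hom Fa_image_submodule f_Fa_image) auto

lemma is_sheaf_quot_sheaf: "is_sheaf R (A - {a}) Fq fq"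
  unfolding is_sheaf_def
proof (intro conjI allI impI ballI)
  fix x assume "x \<subseteq> A - {a}"
  then show "module R (Fq x)"
    unfolding quot_sheaf_eq by (intro quot_module_module[where R = R] F.module_G Fa_image_submodule) auto
next
  fix x y assume "x \<subseteq> y \<and> y \<subseteq> A - {a}"
  then show "fq y x \<in> module_hom R (Fq y) (Fq x)"
    unfolding quot_sheaf_eq quot_sheaf_map_eq
    by (intro quot_map_hom[where R = R] F.module_G F.g_hom Fa_image_submodule f_Fa_image)
      (auto dest: F.g_closed[rotated 2])
next
  fix x X assume x: "x \<subseteq> A - {a}" and "X \<in> carrier (Fq x)"
  then obtain v where v: "v \<in> carrier (F x)" "X = Fa_image x +>\<^bsub>F x\<^esub> v"
    unfolding quot_sheaf_eq quot_module_carrier by blast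
  then show "fq x x X = X"
    using quot_sheaf_map_coset[OF subset_refl x v(1)] F.g_id[OF _ v(1)] x by (simp add: subset_Diff_insert)
next
  fix x y z X assume xyz: "x \<subseteq> y \<and> y \<subseteq> z \<and> z \<subseteq> A - {a}" and "X \<in> carrier (Fq z)"
  then obtain v where v: "v \<in> carrier (F z)" "X = Fa_image z +>\<^bsub>F z\<^esub> v"
    unfolding quot_sheaf_eq quot_module_carrier by blast
  from xyz have "x \<subseteq> y" "y \<subseteq> z" "z \<subseteq> A - {a}" "y \<subseteq> A - {a}" "z \<subseteq> A" by auto
  then show "fq y x (fq z y X) = fq z x X"
    using v F.g_closed[OF _ _ v(1)]
    by (simp add: quot_sheaf_map_coset F.g_comp[OF _ _ _ v(1)] order_trans[of x y z])
qed

sublocale Q: cellular_sheaf R "A - {a}" Fq fq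
  using is_sheaf_quot_sheaf F.finite_S by (intro cellular_sheaf.intro) auto

definition proj_chain :: "nat \<Rightarrow> ('a set \<Rightarrow> 'm) \<Rightarrow> 'a set \<Rightarrow> 'm set" where
  "proj_chain k c = (\<lambda>y. if y \<subseteq> A - {a} \<and> card y = k then Fa_image y +>\<^bsub>F y\<^esub> c y else undefined)"

lemma proj_chain_apply: "y \<subseteq> A - {a} \<Longrightarrow> card y = k \<Longrightarrow> proj_chain k c y = Fa_image y +>\<^bsub>F y\<^esub> c y"
  unfolding proj_chain_def by simp

lemma coset_proj_hom: "y \<subseteq> A - {a} \<Longrightarrow> (\<lambda>v. Fa_image y +>\<^bsub>F y\<^esub> v) \<in> module_hom R (F y) (Fq y)"
  unfolding quot_sheaf_eq by (rule quot_module_proj_hom[OF F.module_G Fa_image_submodule]) auto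

lemma proj_chain_closed:
  assumes c: "c \<in> carrier (cell_chains A F k)"
  shows "proj_chain k c \<in> carrier (cell_chains (A - {a}) Fq k)"
  unfolding cell_chains_carrier
  using module_hom_closed[OF coset_proj_hom cell_chains_mem[OF c]] by (auto simp: proj_chain_def)

lemma proj_chain_hom: "proj_chain k \<in> module_hom R (cell_chains A F k) (cell_chains (A - {a}) Fq k)"
proof -
  interpret C: module R "cell_chains A F k" by (rule F.module_chains)
  interpret C': module R "cell_chains (A - {a}) Fq k" by (rule Q.module_chains)
  show ?thesis
    unfolding module_hom_def
  proof (intro CollectI conjI ballI)
    show "proj_chain k \<in> carrier (cell_chains A F k) \<rightarrow> carrier (cell_chains (A - {a}) Fq k)"
      using proj_chain_closed by blast
  next
    fix c c' assume c: "c \<in> carrier (cell_chains A F k)" "c' \<in> carrier (cell_chains A F k)"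
    show "proj_chain k (c \<oplus>\<^bsub>cell_chains A F k\<^esub> c') =
        proj_chain k c \<oplus>\<^bsub>cell_chains (A - {a}) Fq k\<^esub> proj_chain k c'"
    proof (rule cell_chains_eqI[where G = Fq])
      fix y assume y: "y \<subseteq> A - {a}" "card y = k"
      then have "y \<subseteq> A" by blast
      with y show "proj_chain k (c \<oplus>\<^bsub>cell_chains A F k\<^esub> c') y =
          (proj_chain k c \<oplus>\<^bsub>cell_chains (A - {a}) Fq k\<^esub> proj_chain k c') y"
        using module_hom_add[OF coset_proj_hom cell_chains_mem[OF c(1)] cell_chains_mem[OF c(2)]]
        by (simp add: proj_chain_apply cell_chains_add)
    qed (use c proj_chain_closed in simp_all)
  next
    fix r c assume r: "r \<in> carrier R" and c: "c \<in> carrier (cell_chains A F k)"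
    show "proj_chain k (r \<odot>\<^bsub>cell_chains A F k\<^esub> c) = r \<odot>\<^bsub>cell_chains (A - {a}) Fq k\<^esub> proj_chain k c"
    proof (rule cell_chains_eqI[where G = Fq])
      fix y assume y: "y \<subseteq> A - {a}" "card y = k"
      then have "y \<subseteq> A" by blast
      with y show "proj_chain k (r \<odot>\<^bsub>cell_chains A F k\<^esub> c) y =
          (r \<odot>\<^bsub>cell_chains (A - {a}) Fq k\<^esub> proj_chain k c) y"
        using module_hom_smult[OF coset_proj_hom r cell_chains_mem[OF c]]
        by (simp add: proj_chain_apply cell_chains_smult)
    qed (use r c proj_chain_closed in simp_all)
  qed
qed

lemma proj_chain_surj: "proj_chain k ` carrier (cell_chains A F k) = carrier (cell_chains (A - {a}) Fq k)"
proof
  show "proj_chain k ` carrier (cell_chains A F k) \<subseteq> carrier (cell_chains (A - {a}) Fq k)"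
    using proj_chain_closed by blast
  show "carrier (cell_chains (A - {a}) Fq k) \<subseteq> proj_chain k ` carrier (cell_chains A F k)"
  proof
    fix q assume q: "q \<in> carrier (cell_chains (A - {a}) Fq k)"
    have "\<exists>v. v \<in> carrier (F y) \<and> q y = Fa_image y +>\<^bsub>F y\<^esub> v" if "y \<subseteq> A - {a}" "card y = k" for y
      using cell_chains_mem[OF q that] unfolding quot_sheaf_eq quot_module_carrier by blast
    then obtain rep where rep: "\<And>y. y \<subseteq> A - {a} \<Longrightarrow> card y = k \<Longrightarrow>
        rep y \<in> carrier (F y) \<and> q y = Fa_image y +>\<^bsub>F y\<^esub> rep y"
      by metis
    define c where "c y = (if y \<subseteq> A - {a} \<and> card y = k then rep y
      else if y \<subseteq> A \<and> card y = k then \<zero>\<^bsub>F y\<^esub> else undefined)" for y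
    have "c \<in> carrier (cell_chains A F k)"
      unfolding cell_chains_carrier c_def
      using rep abelian_groupE(2)[OF module.axioms(2)[OF F.module_G]] by auto
    moreover have "proj_chain k c = q"
      using rep by (intro cell_chains_eqI[OF proj_chain_closed[OF \<open>c \<in> _\<close>] q])
        (simp add: proj_chain_apply c_def)
    ultimately show "q \<in> proj_chain k ` carrier (cell_chains A F k)" by blast
  qed
qed

lemma boundary_term_a_in_Fa_image:
  assumes c: "c \<in> carrier (cell_chains A F (Suc k))" and y: "y \<subseteq> A - {a}" "card y = k"
  shows "boundary_term R F f c y a \<in> Fa_image y"
proof -
  have "y \<subseteq> A" "a \<in> A - y" using y a_in_A by auto
  then have "f (insert a y) y (c (insert a y)) \<in> Fa_image y"
    unfolding Fa_image_def using cell_chains_mem[OF c F.insert_cell[OF _ y(2)]] by blast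
  then show ?thesis
    unfolding boundary_term_def
    using submodule.smult_closed[OF Fa_image_submodule[OF y(1)] F.minus_one_pow_closed] by blast
qed

lemma proj_boundary_term:
  assumes c: "c \<in> carrier (cell_chains A F (Suc k))" and y: "y \<subseteq> A - {a}" "card y = k"
    and b: "b \<in> A - {a} - y"
  shows "boundary_term R Fq fq (proj_chain (Suc k) c) y b = Fa_image y +>\<^bsub>F y\<^esub> boundary_term R F f c y b"
proof -
  note yb = Q.insert_cell[OF y b]
  have yb_A: "insert b y \<subseteq> A" using yb(1) by blast
  have cb: "c (insert b y) \<in> carrier (F (insert b y))" by (rule cell_chains_mem[OF c yb_A yb(2)])
  show ?thesis
    unfolding boundary_term_def proj_chain_apply[OF yb] quot_sheaf_map_coset[OF subset_insertI yb(1) cb]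
    using module_hom_smult[OF coset_proj_hom[OF y(1)] F.minus_one_pow_closed F.g_closed[OF subset_insertI yb_A cb]]
    by simp
qed

lemma proj_chain_cell_diff:
  assumes c: "c \<in> carrier (cell_chains A F (Suc k))"
  shows "proj_chain k (cell_diff R A F f k c) = cell_diff R (A - {a}) Fq fq k (proj_chain (Suc k) c)"
proof (rule cell_chains_eqI[where G = Fq])
  fix y assume y: "y \<subseteq> A - {a}" "card y = k"
  interpret Fy: module R "F y" using F.module_G y by blast
  interpret Qy: module R "Fq y" by (rule Q.module_G[OF y(1)])
  interpret \<pi>: abelian_group_hom "F y" "Fq y" "\<lambda>v. Fa_image y +>\<^bsub>F y\<^esub> v"
    by (rule module_hom_abelian_group_hom[OF Fy.module_axioms Qy.module_axioms coset_proj_hom[OF y(1)]])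
  let ?t = "boundary_term R F f c y" and ?B = "A - {a} - y"
  have yA: "y \<subseteq> A" and Ay: "A - y = insert a ?B" "a \<notin> ?B" and fin: "finite ?B"
    using y a_in_A F.finite_S by auto
  have t: "?t \<in> A - y \<rightarrow> carrier (F y)" using F.boundary_term_closed[OF c yA y(2)] by blast
  have ta: "Fa_image y +>\<^bsub>F y\<^esub> ?t a = \<zero>\<^bsub>Fq y\<^esub>"
    using boundary_term_a_in_Fa_image[OF c y] t Ay yA unfolding quot_sheaf_eq
    by (subst quot_module_zero_iff[OF F.module_G Fa_image_submodule[OF y(1)]]) auto
  have "proj_chain k (cell_diff R A F f k c) y = Fa_image y +>\<^bsub>F y\<^esub> (?t a \<oplus>\<^bsub>F y\<^esub> finsum (F y) ?t ?B)"
    unfolding proj_chain_apply[OF y] cell_diff_apply[OF yA y(2)] Ay(1)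
    using t Ay fin by (subst Fy.finsum_insert) auto
  also have "\<dots> = Fa_image y +>\<^bsub>F y\<^esub> finsum (F y) ?t ?B"
    using t Ay ta by (simp add: Pi_iff)
  also have "\<dots> = finsum (Fq y) (\<lambda>b. Fa_image y +>\<^bsub>F y\<^esub> ?t b) ?B"
    using t fin by (intro module_hom_finsum[OF Fy.module_axioms Qy.module_axioms coset_proj_hom[OF y(1)]]) auto
  also have "\<dots> = cell_diff R (A - {a}) Fq fq k (proj_chain (Suc k) c) y"
    unfolding cell_diff_apply[OF y] using Q.boundary_term_closed[OF proj_chain_closed[OF c] y]
    by (intro Qy.finsum_cong') (auto simp: proj_boundary_term[OF c y])
  finally show "proj_chain k (cell_diff R A F f k c) y = cell_diff R (A - {a}) Fq fq k (proj_chain (Suc k) c) y" .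
qed (use c F.cell_diff_closed Q.cell_diff_closed proj_chain_closed in simp_all)

sublocale chain_map R "cell_chains A F" "cell_diff R A F f" "cell_chains (A - {a}) Fq"
  "cell_diff R (A - {a}) Fq fq" proj_chain
  by (intro chain_map.intro chain_map_axioms.intro F.chain_complex_axioms Q.chain_complex_axioms
      proj_chain_hom proj_chain_cell_diff)

lemma cell_diff_eq_boundary_term_a:
  assumes w: "w \<in> carrier (cell_chains A F (Suc j))" and y: "y \<subseteq> A - {a}" "card y = j"
    and vanish: "\<And>x. x \<subseteq> A - {a} \<Longrightarrow> card x = Suc j \<Longrightarrow> w x = \<zero>\<^bsub>F x\<^esub>"
  shows "cell_diff R A F f j w y = boundary_term R F f w y a"
proof -
  interpret Fy: module R "F y" using F.module_G y by blast
  let ?t = "boundary_term R F f w y" and ?B = "A - {a} - y"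
  have yA: "y \<subseteq> A" and Ay: "A - y = insert a ?B" "a \<notin> ?B" and fin: "finite ?B"
    using y a_in_A F.finite_S by auto
  have t: "?t \<in> A - y \<rightarrow> carrier (F y)" using F.boundary_term_closed[OF w yA y(2)] by blast
  have "?t b = \<zero>\<^bsub>F y\<^esub>" if b: "b \<in> ?B" for b
  proof -
    note yb = Q.insert_cell[OF y b]
    have ybA: "insert b y \<subseteq> A" using yb(1) by blast
    have "f (insert b y) y \<zero>\<^bsub>F (insert b y)\<^esub> = \<zero>\<^bsub>F y\<^esub>"
      using F.g_hom[OF subset_insertI ybA]
      by (rule module_hom_abelian_group_hom[OF F.module_G[OF ybA] Fy.module_axioms,
            THEN abelian_group_hom.hom_zero])
    then show ?thesis
      unfolding boundary_term_def vanish[OF yb] using F.minus_one_pow_closed by simp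
  qed
  then have "finsum (F y) ?t ?B = finsum (F y) (\<lambda>_. \<zero>\<^bsub>F y\<^esub>) ?B"
    by (intro Fy.finsum_cong') auto
  then have "finsum (F y) ?t ?B = \<zero>\<^bsub>F y\<^esub>" by simp
  then show ?thesis
    unfolding cell_diff_apply[OF yA y(2)] Ay(1) using t Ay fin by (subst Fy.finsum_insert) auto
qed

lemma kernel_chain_lift:
  assumes z: "z \<in> carrier (cell_chains A F m)"
    and proj_z: "proj_chain m z = \<zero>\<^bsub>cell_chains (A - {a}) Fq m\<^esub>"
  obtains t where "\<And>y. y \<subseteq> A - {a} \<Longrightarrow> card y = m \<Longrightarrow>
    t y \<in> carrier (F (insert a y)) \<and> f (insert a y) y (t y) = z y"
proof -
  have z_img: "z y \<in> Fa_image y" if y: "y \<subseteq> A - {a}" "card y = m" for y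
  proof -
    have yA: "y \<subseteq> A" using y by blast
    have "Fa_image y +>\<^bsub>F y\<^esub> z y = \<zero>\<^bsub>quot_module (F y) (carrier (F y)) (Fa_image y)\<^esub>"
      using fun_cong[OF proj_z, of y] cell_chains_zero[OF y, of Fq]
      unfolding proj_chain_apply[OF y] quot_sheaf_eq by simp
    then show ?thesis
      using quot_module_zero_iff[OF F.module_G[OF yA] Fa_image_submodule[OF y(1)] cell_chains_mem[OF z yA y(2)]]
      by blast
  qed
  define t where "t y = (SOME u. u \<in> carrier (F (insert a y)) \<and> f (insert a y) y u = z y)" for y
  have "t y \<in> carrier (F (insert a y)) \<and> f (insert a y) y (t y) = z y"
    if y: "y \<subseteq> A - {a}" "card y = m" for y
  proof -
    from z_img[OF y] obtain u where u: "u \<in> carrier (F (insert a y))" "z y = f (insert a y) y u"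
      unfolding Fa_image_def by (rule imageE)
    show ?thesis unfolding t_def by (rule someI[where x = u]) (simp add: u)
  qed
  then show ?thesis by (rule that)
qed

(* The sign cancels the one in boundary_term, so that the a-face of the boundary of cone m t
   at y is f (insert a y) y (t y), see cell_diff_cone. *)
definition cone :: "nat \<Rightarrow> ('a set \<Rightarrow> 'm) \<Rightarrow> 'a set \<Rightarrow> 'm" where
  "cone m t x = (if x \<subseteq> A \<and> card x = Suc m then
     (if a \<in> x then minus_one_pow R (card {b \<in> x. b < a}) \<odot>\<^bsub>F x\<^esub> t (x - {a}) else \<zero>\<^bsub>F x\<^esub>)
     else undefined)"

lemma cone_vanishes: "x \<subseteq> A - {a} \<Longrightarrow> card x = Suc m \<Longrightarrow> cone m t x = \<zero>\<^bsub>F x\<^esub>"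
  unfolding cone_def by auto

context
  fixes m t
  assumes t: "\<And>y. y \<subseteq> A - {a} \<Longrightarrow> card y = m \<Longrightarrow> t y \<in> carrier (F (insert a y))"
begin

lemma cone_closed: "cone m t \<in> carrier (cell_chains A F (Suc m))"
  unfolding cell_chains_carrier
proof (intro conjI allI impI)
  fix x assume x: "x \<subseteq> A \<and> card x = Suc m"
  interpret Fx: module R "F x" using F.module_G x by blast
  show "cone m t x \<in> carrier (F x)"
  proof (cases "a \<in> x")
    case True
    then have "x - {a} \<subseteq> A - {a}" "card (x - {a}) = m" "insert a (x - {a}) = x"
      using x finite_subset[OF _ F.finite_S] by auto
    then show ?thesis
      unfolding cone_def using x True t F.minus_one_pow_closed by (metis Fx.smult_closed)
  qed (use x in \<open>simp add: cone_def\<close>)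
qed (auto simp: cone_def)

lemma proj_chain_cone: "proj_chain (Suc m) (cone m t) = \<zero>\<^bsub>cell_chains (A - {a}) Fq (Suc m)\<^esub>"
proof (rule cell_chains_eqI[where G = Fq])
  fix y assume y: "y \<subseteq> A - {a}" "card y = Suc m"
  show "proj_chain (Suc m) (cone m t) y = \<zero>\<^bsub>cell_chains (A - {a}) Fq (Suc m)\<^esub> y"
    unfolding proj_chain_apply[OF y] cone_vanishes[OF y] cell_chains_zero[OF y] quot_sheaf_eq
    using y by (intro quot_module_zero[OF F.module_G Fa_image_submodule, symmetric]) auto
qed (use proj_chain_closed[OF cone_closed] Q.module_chains abelian_groupE(2)[OF module.axioms(2)] in blast)+

lemma cell_diff_cone:
  assumes y: "y \<subseteq> A - {a}" "card y = m"
  shows "cell_diff R A F f m (cone m t) y = f (insert a y) y (t y)"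
proof -
  interpret R: cring R by (rule F.cring_R)
  interpret Fy: module R "F y" using F.module_G y by blast
  let ?s = "minus_one_pow R (card {b \<in> insert a y. b < a})"
  have yA: "y \<subseteq> A" "a \<in> A - y" using y a_in_A by auto
  have ay: "insert a y \<subseteq> A" "card (insert a y) = Suc m" "insert a y - {a} = y" "y \<subseteq> insert a y"
    using F.insert_cell[OF yA(1) y(2) yA(2)] yA by auto
  have ty: "t y \<in> carrier (F (insert a y))" by (rule t[OF y])
  have "cell_diff R A F f m (cone m t) y = boundary_term R F f (cone m t) y a"
    by (rule cell_diff_eq_boundary_term_a[OF cone_closed y cone_vanishes])
  also have "\<dots> = ?s \<odot>\<^bsub>F y\<^esub> f (insert a y) y (?s \<odot>\<^bsub>F (insert a y)\<^esub> t y)"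
    unfolding boundary_term_def cone_def using ay by simp
  also have "\<dots> = (?s \<otimes>\<^bsub>R\<^esub> ?s) \<odot>\<^bsub>F y\<^esub> f (insert a y) y (t y)"
    using module_hom_smult[OF F.g_hom[OF ay(4,1)] F.minus_one_pow_closed ty]
      F.g_closed[OF ay(4,1) ty] F.minus_one_pow_closed by (simp add: Fy.smult_assoc1)
  also have "\<dots> = f (insert a y) y (t y)"
    using F.g_closed[OF ay(4,1) ty] by (simp add: R.minus_one_pow_square)
  finally show ?thesis .
qed

end

end

section \<open>Acyclicity of the kernel\<close>

locale injective_point_quotient = point_quotient +
  assumes f_inj: "x \<subseteq> A - {a} \<Longrightarrow> inj_on (f (insert a x) x) (carrier (F (insert a x)))"
begin

lemma cycle_eq_zero_if_vanishes:
  assumes w: "w \<in> cycles (cell_chains A F) (cell_diff R A F f) m"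
    and vanish: "\<And>y. y \<subseteq> A - {a} \<Longrightarrow> card y = m \<Longrightarrow> w y = \<zero>\<^bsub>F y\<^esub>"
  shows "w = \<zero>\<^bsub>cell_chains A F m\<^esub>"
proof (rule cell_chains_eqI[where G = F])
  fix x assume x: "x \<subseteq> A" "card x = m"
  interpret Fx: module R "F x" using F.module_G x by blast
  show "w x = \<zero>\<^bsub>cell_chains A F m\<^esub> x"
  proof (cases "a \<in> x")
    case False
    then show ?thesis using vanish x by (simp add: cell_chains_zero subset_Diff_insert)
  next
    case True
    define y where "y = x - {a}"
    have y: "y \<subseteq> A - {a}" "x = insert a y" "y \<subseteq> x" using x True unfolding y_def by auto
    then obtain j where j: "m = Suc j" "card y = j"
      using x finite_subset[OF x(1) F.finite_S] True by (metis card_Suc_Diff1 y_def)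
    interpret Fy: module R "F y" using F.module_G y by blast
    have wC: "w \<in> carrier (cell_chains A F (Suc j))" and dw: "cell_diff R A F f j w = \<zero>\<^bsub>cell_chains A F j\<^esub>"
      using w j(1) by (simp_all add: cycles_Suc)
    have h: "f x y \<in> module_hom R (F x) (F y)" using F.g_hom[OF y(3) x(1)] .
    interpret f: abelian_group_hom "F x" "F y" "f x y"
      by (rule module_hom_abelian_group_hom[OF Fx.module_axioms Fy.module_axioms h])
    let ?s = "minus_one_pow R (card {b \<in> x. b < a})"
    have wx: "w x \<in> carrier (F x)" using cell_chains_mem[OF subsetD[OF F.cycles_subset w] x] .
    have "boundary_term R F f w y a = cell_diff R A F f j w y"
      using vanish j(1) by (intro cell_diff_eq_boundary_term_a[OF wC y(1) j(2), symmetric]) simp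
    also have "\<dots> = \<zero>\<^bsub>F y\<^esub>" using dw cell_chains_zero[of y A j F] y(1) j(2) by auto
    finally have "?s \<odot>\<^bsub>F y\<^esub> f x y (w x) = \<zero>\<^bsub>F y\<^esub>"
      unfolding boundary_term_def y(2)[symmetric] .
    then have "(?s \<otimes>\<^bsub>R\<^esub> ?s) \<odot>\<^bsub>F y\<^esub> f x y (w x) = \<zero>\<^bsub>F y\<^esub>"
      using wx F.minus_one_pow_closed by (simp add: Fy.smult_assoc1)
    then have "f x y (w x) = f x y \<zero>\<^bsub>F x\<^esub>" using wx by (simp add: cring.minus_one_pow_square[OF F.cring_R])
    then have "w x = \<zero>\<^bsub>F x\<^esub>"
      using inj_onD[OF f_inj[OF y(1)]] wx Fx.zero_closed unfolding y(2)[symmetric] by blast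
    then show ?thesis using x by (simp add: cell_chains_zero)
  qed
qed (use subsetD[OF F.cycles_subset w] F.module_chains[THEN module.axioms(2), THEN abelian_groupE(2)] in auto)

lemma kernel_acyclic:
  assumes z: "z \<in> cycles (cell_chains A F) (cell_diff R A F f) m"
    and proj_z: "proj_chain m z = \<zero>\<^bsub>cell_chains (A - {a}) Fq m\<^esub>"
  shows "\<exists>e\<in>carrier (cell_chains A F (Suc m)).
    proj_chain (Suc m) e = \<zero>\<^bsub>cell_chains (A - {a}) Fq (Suc m)\<^esub> \<and> cell_diff R A F f m e = z"
proof -
  interpret C: module R "cell_chains A F m" by (rule F.module_chains)
  have zC: "z \<in> carrier (cell_chains A F m)" using z F.cycles_subset by blast
  obtain t where t: "\<And>y. y \<subseteq> A - {a} \<Longrightarrow> card y = m \<Longrightarrow>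
      t y \<in> carrier (F (insert a y)) \<and> f (insert a y) y (t y) = z y"
    using kernel_chain_lift[OF zC proj_z] by blast
  then have tC: "\<And>y. y \<subseteq> A - {a} \<Longrightarrow> card y = m \<Longrightarrow> t y \<in> carrier (F (insert a y))"
    by blast
  let ?e = "cone m t"
  have eC: "?e \<in> carrier (cell_chains A F (Suc m))" by (rule cone_closed[OF tC])
  let ?w = "cell_diff R A F f m ?e \<oplus>\<^bsub>cell_chains A F m\<^esub> \<ominus>\<^bsub>cell_chains A F m\<^esub> z"
  have deC: "cell_diff R A F f m ?e \<in> carrier (cell_chains A F m)" by (rule F.cell_diff_closed[OF eC])
  have "?w \<in> cycles (cell_chains A F) (cell_diff R A F f) m"
    by (intro C.submoduleE(5)[OF F.cycles_submodule] C.submoduleE(3)[OF F.cycles_submodule]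
        F.boundary_in_cycles[OF eC] z)
  moreover have "?w y = \<zero>\<^bsub>F y\<^esub>" if y: "y \<subseteq> A - {a}" "card y = m" for y
  proof -
    have yA: "y \<subseteq> A" using y by blast
    interpret Fy: module R "F y" using F.module_G[OF yA] .
    interpret ev: abelian_group_hom "cell_chains A F m" "F y" "\<lambda>c. c y"
      by (rule module_hom_abelian_group_hom[OF F.module_chains Fy.module_axioms cell_chains_eval_hom[OF yA y(2)]])
    show ?thesis
      using deC zC cell_diff_cone[OF tC y] t[OF y] cell_chains_mem[OF zC yA y(2)]
      by (simp add: Fy.r_neg)
  qed
  ultimately have "?w = \<zero>\<^bsub>cell_chains A F m\<^esub>" by (rule cycle_eq_zero_if_vanishes)
  then have "cell_diff R A F f m ?e = z"
    using C.minus_equality[OF _ C.a_inv_closed[OF zC] deC] zC by simp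
  with eC proj_chain_cone[OF tC] show ?thesis by blast
qed

sublocale surjective_chain_map_acyclic_kernel R "cell_chains A F" "cell_diff R A F f"
  "cell_chains (A - {a}) Fq" "cell_diff R (A - {a}) Fq fq" proj_chain
  by (intro surjective_chain_map_acyclic_kernel.intro chain_map_axioms
      surjective_chain_map_acyclic_kernel_axioms.intro proj_chain_surj kernel_acyclic)

end

theorem theorem5:
  fixes R :: "'r ring" and A :: "'a::linorder set" and a :: 'a
    and F :: "'a set \<Rightarrow> ('r, 'm) module" and f :: "'a set \<Rightarrow> 'a set \<Rightarrow> 'm \<Rightarrow> 'm"
  assumes "cring R"
    and "finite A"
    and "is_sheaf R A F f"
    and "a \<in> A"
    and "\<forall>x. x \<subseteq> A - {a} \<longrightarrow> inj_on (f (insert a x) x) (carrier (F (insert a x)))"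
  shows "\<forall>k. module_isomorphic R (HC R A F f k)
              (HC R (A - {a}) (quot_sheaf F f a) (quot_sheaf_map F f a) k)"
proof
  fix k
  interpret injective_point_quotient R A F f a
    using assms by (intro injective_point_quotient.intro point_quotient.intro
        injective_point_quotient_axioms.intro point_quotient_axioms.intro cellular_sheaf.intro) auto
  show "module_isomorphic R (HC R A F f k) (HC R (A - {a}) (quot_sheaf F f a) (quot_sheaf_map F f a) k)"
    unfolding HC_eq_homology by (rule homology_isomorphic)
qed

end
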